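(* For any fixed $\epsilon>0$, the $\epsilon$-\textsc{MFS} problem can be solved in $n^{O(\log n)}$ steps, where $n$ is the input size.
   Context: Let $\Delta_{m}$ denote the set of probability vectors in $\mathbb{R}^{m}$. $\epsilon$-\textsc{MFS} (maximum $\epsilon$-feasible subsystem of linear inequalities): given a matrix $A\in[-1,1]^{n_{\text{row}}\times n_{\text{col}}}$, let $\mathbf{x}^\ast\in\Delta_{n_{\text{col}}}$ be a probability vector maximizing $k^\ast=\sum_{i\in[n_{\text{row}}]}I[w^\ast_i\ge0]$ where $\mathbf{w}^\ast=A\mathbf{x}^\ast$ ($I$ is the indicator function). The task is to find a probability vector $\mathbf{x}\in\Delta_{n_{\text{col}}}$ such that, with $\mathbf{w}=A\mathbf{x}$, $\sum_{i\in[n_{\text{row}}]}I[w_i\ge-\epsilon]\ge k^\ast$. *)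

theory Defs
  imports Complex_Main
begin

text \<open>A matrix with n_row rows and n_col columns is a function A :: nat => nat => real,
  of which only the entries A i j with i < n_row, j < n_col are relevant.
  Vectors of R^m are functions nat => real restricted to indices < m.\<close>

definition prob_simplex :: "nat \<Rightarrow> (nat \<Rightarrow> real) set" where
  "prob_simplex m = {x. (\<forall>j<m. 0 \<le> x j) \<and> (\<Sum>j<m. x j) = 1}"

definition mat_vec :: "(nat \<Rightarrow> nat \<Rightarrow> real) \<Rightarrow> nat \<Rightarrow> (nat \<Rightarrow> real) \<Rightarrow> nat \<Rightarrow> real" where
  "mat_vec A ncol x i = (\<Sum>j<ncol. A i j * x j)"

definition num_feasible :: "(nat \<Rightarrow> nat \<Rightarrow> real) \<Rightarrow> nat \<Rightarrow> nat \<Rightarrow> real \<Rightarrow> (nat \<Rightarrow> real) \<Rightarrow> nat" where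
  "num_feasible A nrow ncol t x = card {i. i < nrow \<and> mat_vec A ncol x i \<ge> - t}"

definition mfs_opt :: "(nat \<Rightarrow> nat \<Rightarrow> real) \<Rightarrow> nat \<Rightarrow> nat \<Rightarrow> nat" where
  "mfs_opt A nrow ncol = Max {num_feasible A nrow ncol 0 x | x. x \<in> prob_simplex ncol}"

definition eps_mfs_solution :: "real \<Rightarrow> (nat \<Rightarrow> nat \<Rightarrow> real) \<Rightarrow> nat \<Rightarrow> nat \<Rightarrow> (nat \<Rightarrow> real) \<Rightarrow> bool" where
  "eps_mfs_solution eps A nrow ncol x \<longleftrightarrow>
     x \<in> prob_simplex ncol \<and> num_feasible A nrow ncol eps x \<ge> mfs_opt A nrow ncol"

text \<open>A unit-cost real RAM (Blum-Shub-Smale style): integer registers (used for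
  indices/addresses; only addition and subtraction) and real registers (exact field
  arithmetic and comparisons); no conversion from reals to integers (no floor).
  Each executed instruction costs one step.\<close>

datatype instr =
    IConst nat int
  | IAdd nat nat nat
  | ISub nat nat nat
  | ILoad nat nat
  | IStore nat nat
  | IJmpLe nat nat nat
  | RConst nat int
  | RAdd nat nat nat
  | RSub nat nat nat
  | RMul nat nat nat
  | RDiv nat nat nat
  | RLoad nat nat
  | RStore nat nat
  | RJmpLe nat nat nat
  | OfInt nat nat
  | Halt

type_synonym state = "nat \<times> (nat \<Rightarrow> int) \<times> (nat \<Rightarrow> real)"

definition halted :: "instr list \<Rightarrow> state \<Rightarrow> bool" where
  "halted P s \<longleftrightarrow> (case s of (pc, _, _) \<Rightarrow> pc \<ge> length P \<or> P ! pc = Halt)"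

fun exec :: "instr \<Rightarrow> state \<Rightarrow> state" where
  "exec (IConst a k) (pc, I, R) = (Suc pc, I(a := k), R)"
| "exec (IAdd a b c) (pc, I, R) = (Suc pc, I(a := I b + I c), R)"
| "exec (ISub a b c) (pc, I, R) = (Suc pc, I(a := I b - I c), R)"
| "exec (ILoad a b) (pc, I, R) = (Suc pc, I(a := I (nat (I b))), R)"
| "exec (IStore a b) (pc, I, R) = (Suc pc, I(nat (I a) := I b), R)"
| "exec (IJmpLe a b l) (pc, I, R) = ((if I a \<le> I b then l else Suc pc), I, R)"
| "exec (RConst a k) (pc, I, R) = (Suc pc, I, R(a := of_int k))"
| "exec (RAdd a b c) (pc, I, R) = (Suc pc, I, R(a := R b + R c))"
| "exec (RSub a b c) (pc, I, R) = (Suc pc, I, R(a := R b - R c))"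
| "exec (RMul a b c) (pc, I, R) = (Suc pc, I, R(a := R b * R c))"
| "exec (RDiv a b c) (pc, I, R) = (Suc pc, I, R(a := R b / R c))"
| "exec (RLoad a b) (pc, I, R) = (Suc pc, I, R(a := R (nat (I b))))"
| "exec (RStore a b) (pc, I, R) = (Suc pc, I, R(nat (I a) := R b))"
| "exec (RJmpLe a b l) (pc, I, R) = ((if R a \<le> R b then l else Suc pc), I, R)"
| "exec (OfInt a b) (pc, I, R) = (Suc pc, I, R(a := of_int (I b)))"
| "exec Halt s = s"

definition step :: "instr list \<Rightarrow> state \<Rightarrow> state" where
  "step P s = (if halted P s then s else exec (P ! fst s) s)"

definition run :: "instr list \<Rightarrow> nat \<Rightarrow> state \<Rightarrow> state" where
  "run P t s = (step P ^^ t) s"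

definition init_state :: "(nat \<Rightarrow> nat \<Rightarrow> real) \<Rightarrow> nat \<Rightarrow> nat \<Rightarrow> state" where
  "init_state A nrow ncol =
     (0, (\<lambda>a. if a = 0 then int nrow else if a = 1 then int ncol else 0),
         (\<lambda>a. if a < nrow * ncol then A (a div ncol) (a mod ncol) else 0))"

definition ram_output :: "state \<Rightarrow> nat \<Rightarrow> real" where
  "ram_output s = snd (snd s)"

end

theory Submission
  imports Defs "HOL-Library.FuncSet"
begin

text \<open>Let \<open>m = \<lceil>1/\<epsilon>\<rceil>\<close>, \<open>2^L > n_row\<close> and \<open>k = 4 m\<^sup>2 (L + 1)\<close>. If \<open>x\<close> attains \<open>k*\<close>,
  draw \<open>k\<close> columns independently according to \<open>x\<close>: by a Chernoff bound each of the \<open>k*\<close>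
  rows with \<open>(A x)\<^sub>i \<ge> 0\<close> has sample average below \<open>-1/m\<close> with probability at most
  \<open>exp (-(L + 1)) < 1 / n_row\<close>, so some \<open>k\<close>-tuple of columns has an empirical distribution
  that \<open>\<epsilon>\<close>-satisfies all these rows. A real RAM can therefore try all \<open>n_col^k\<close> tuples and
  output the empirical distribution of a best one; since \<open>k = O(log n)\<close>, this takes
  \<open>n^O(log n)\<close> steps.\<close>

section \<open>Sampling from a probability vector\<close>

lemma exp_le_quadratic:
  fixes y :: real
  assumes "\<bar>y\<bar> \<le> 1"
  shows "exp y \<le> 1 + y + y^2"
proof (cases "0 \<le> y")
  case True
  then show ?thesis using exp_bound[of y] assms by auto
next
  case False
  have pos: "0 < 1 - y" using False by simp
  have "exp y = 1 / exp (-y)" by (simp add: exp_minus field_simps)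
  also have "\<dots> \<le> 1 / (1 - y)"
    using exp_ge_add_one_self[of "-y"] pos by (intro divide_left_mono) auto
  also have "\<dots> \<le> 1 + y + y^2"
  proof -
    have "(1 - y) * (1 + y + y^2) = 1 - y^3"
      by (simp add: algebra_simps power2_eq_square power3_eq_cube)
    moreover have "y^3 \<le> 0" using False by (simp add: power3_eq_cube mult_nonneg_nonpos)
    ultimately have "1 \<le> (1 - y) * (1 + y + y^2)" by simp
    then show ?thesis using pos by (simp add: divide_le_eq mult.commute)
  qed
  finally show ?thesis .
qed

lemma prob_simplex_exp_moment_le:
  fixes x a :: "nat \<Rightarrow> real" and r :: real
  assumes x: "x \<in> prob_simplex n" and a: "\<And>j. j < n \<Longrightarrow> \<bar>a j\<bar> \<le> 1"
    and mean: "0 \<le> (\<Sum>j<n. a j * x j)" and r: "0 \<le> r" "r \<le> 1"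
  shows "(\<Sum>j<n. x j * exp (- r * a j)) \<le> exp (r^2)"
proof -
  have x0: "\<And>j. j < n \<Longrightarrow> 0 \<le> x j" and x1: "(\<Sum>j<n. x j) = 1"
    using x by (auto simp: prob_simplex_def)
  have "exp (- r * a j) \<le> 1 - r * a j + r^2" if j: "j < n" for j
  proof -
    have "\<bar>- r * a j\<bar> \<le> 1" using a[OF j] r by (simp add: abs_mult mult_le_one)
    then have "exp (- r * a j) \<le> 1 - r * a j + r^2 * (a j)^2"
      using exp_le_quadratic[of "- r * a j"] by (simp add: power_mult_distrib)
    also have "r^2 * (a j)^2 \<le> r^2"
      using a[OF j] by (intro mult_left_le) (auto simp: abs_square_le_1)
    finally show ?thesis by simp
  qed
  then have "(\<Sum>j<n. x j * exp (- r * a j)) \<le> (\<Sum>j<n. x j * (1 - r * a j + r^2))"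
    using x0 by (intro sum_mono mult_left_mono) auto
  also have "\<dots> = (\<Sum>j<n. x j) - r * (\<Sum>j<n. a j * x j) + r^2 * (\<Sum>j<n. x j)"
    by (simp add: algebra_simps sum.distrib sum_subtractf sum_distrib_left sum_distrib_right)
  also have "\<dots> \<le> 1 + r^2" using x1 mean r by simp
  also have "\<dots> \<le> exp (r^2)" by simp
  finally show ?thesis .
qed

definition tuple_weight :: "(nat \<Rightarrow> real) \<Rightarrow> nat \<Rightarrow> (nat \<Rightarrow> nat) \<Rightarrow> real" where
  "tuple_weight x k t = (\<Prod>l<k. x (t l))"

lemma tuple_weight_nonneg:
  "x \<in> prob_simplex n \<Longrightarrow> t \<in> {..<k} \<rightarrow>\<^sub>E {..<n} \<Longrightarrow> 0 \<le> tuple_weight x k t"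
  unfolding tuple_weight_def prob_simplex_def by (intro prod_nonneg) auto

lemma sum_tuple_weight:
  assumes "x \<in> prob_simplex n"
  shows "(\<Sum>t \<in> {..<k} \<rightarrow>\<^sub>E {..<n}. tuple_weight x k t) = 1"
proof -
  have "(\<Sum>t \<in> {..<k} \<rightarrow>\<^sub>E {..<n}. tuple_weight x k t) = (\<Prod>l<k. \<Sum>j<n. x j)"
    unfolding tuple_weight_def by (rule prod_sum_PiE[symmetric]) auto
  then show ?thesis using assms by (simp add: prob_simplex_def)
qed

text \<open>\<open>tuple_weight x k\<close> is the law of \<open>k\<close> independent samples from \<open>x\<close>, so this is a
  Chernoff bound; the exponential moment is taken at \<open>1 / (2 m)\<close>.\<close>

lemma tuple_weight_lower_tail:
  fixes x a :: "nat \<Rightarrow> real" and m :: nat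
  assumes x: "x \<in> prob_simplex n" and a: "\<And>j. j < n \<Longrightarrow> \<bar>a j\<bar> \<le> 1"
    and mean: "0 \<le> (\<Sum>j<n. a j * x j)" and m: "m \<ge> 1"
  shows "(\<Sum>t \<in> {t \<in> {..<k} \<rightarrow>\<^sub>E {..<n}. real m * (\<Sum>l<k. a (t l)) < - real k}.
           tuple_weight x k t) \<le> exp (- real k / (4 * real m^2))"
    (is "(\<Sum>t\<in>?Bad. _) \<le> _")
proof -
  define r where "r = 1 / (2 * real m)"
  define E where "E t = exp (- r * ((\<Sum>l<k. a (t l)) + real k / real m))" for t
  have mpos: "0 < real m" using m by simp
  have r: "0 \<le> r" "r \<le> 1" using m unfolding r_def by (auto simp: field_simps)
  have "(\<Sum>t\<in>?Bad. tuple_weight x k t) \<le> (\<Sum>t\<in>?Bad. tuple_weight x k t * E t)"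
  proof (rule sum_mono)
    fix t assume t: "t \<in> ?Bad"
    then have "(\<Sum>l<k. a (t l)) + real k / real m < 0"
      using mpos by (simp add: field_simps)
    then have "1 \<le> E t" unfolding E_def using r by (simp add: mult_nonneg_nonpos)
    then show "tuple_weight x k t \<le> tuple_weight x k t * E t"
      using tuple_weight_nonneg[OF x, of t k] t by (simp add: mult_le_cancel_left1)
  qed
  also have "\<dots> \<le> (\<Sum>t \<in> {..<k} \<rightarrow>\<^sub>E {..<n}. tuple_weight x k t * E t)"
    using tuple_weight_nonneg[OF x] by (intro sum_mono2) (auto simp: E_def finite_PiE)
  also have "\<dots> = exp (- r * real k / real m) * (\<Sum>j<n. x j * exp (- r * a j)) ^ k"
  proof -
    have "tuple_weight x k t * E t
        = exp (- r * real k / real m) * (\<Prod>l<k. x (t l) * exp (- r * a (t l)))" for t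
      by (simp add: E_def tuple_weight_def prod.distrib exp_sum[symmetric] sum_negf
          sum_distrib_left exp_add[symmetric] algebra_simps)
    moreover have "(\<Sum>t \<in> {..<k} \<rightarrow>\<^sub>E {..<n}. \<Prod>l<k. x (t l) * exp (- r * a (t l)))
        = (\<Prod>l<k. \<Sum>j<n. x j * exp (- r * a j))"
      by (rule prod_sum_PiE[symmetric]) auto
    ultimately show ?thesis by (simp add: sum_distrib_left[symmetric])
  qed
  also have "\<dots> \<le> exp (- r * real k / real m) * exp (r^2) ^ k"
    using prob_simplex_exp_moment_le[OF x a mean r] x
    by (intro mult_left_mono power_mono) (auto simp: prob_simplex_def intro!: sum_nonneg)
  also have "\<dots> = exp (- real k / (4 * real m^2))"
    using mpos by (simp add: r_def exp_of_nat_mult[symmetric] exp_add[symmetric]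
        field_simps power2_eq_square)
  finally show ?thesis .
qed

lemma union_bound_avoid:
  fixes w :: "'a \<Rightarrow> real"
  assumes S: "finite S" "\<And>t. t \<in> S \<Longrightarrow> 0 \<le> w t" "sum w S = 1" and G: "finite G"
    and B: "\<And>i. i \<in> G \<Longrightarrow> B i \<subseteq> S" "\<And>i. i \<in> G \<Longrightarrow> sum w (B i) \<le> \<delta>"
    and small: "real (card G) * \<delta> < 1"
  shows "\<exists>t\<in>S. \<forall>i\<in>G. t \<notin> B i"
proof (rule ccontr)
  assume "\<not> ?thesis"
  then have cover: "\<exists>i\<in>G. t \<in> B i" if "t \<in> S" for t using that by blast
  have "1 = (\<Sum>t\<in>S. w t)" using S by simp
  also have "\<dots> \<le> (\<Sum>t\<in>S. \<Sum>i\<in>G. if t \<in> B i then w t else 0)"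
  proof (rule sum_mono)
    fix t assume t: "t \<in> S"
    with cover obtain i where "i \<in> G" "t \<in> B i" by blast
    then show "w t \<le> (\<Sum>i\<in>G. if t \<in> B i then w t else 0)"
      using member_le_sum[of i G "\<lambda>i. if t \<in> B i then w t else 0"] S(2)[OF t] G by auto
  qed
  also have "\<dots> = (\<Sum>i\<in>G. sum w (B i))"
    using S(1) B(1) by (subst sum.swap) (simp add: sum.If_cases Int_absorb1)
  also have "\<dots> \<le> real (card G) * \<delta>"
    using sum_mono[of G "\<lambda>i. sum w (B i)" "\<lambda>_. \<delta>"] B(2) by simp
  finally show False using small by simp
qed

lemma sparse_approximation:
  fixes A :: "nat \<Rightarrow> nat \<Rightarrow> real" and m k L :: nat
  assumes x: "x \<in> prob_simplex ncol" and A: "\<forall>i<nrow. \<forall>j<ncol. \<bar>A i j\<bar> \<le> 1"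
    and m: "m \<ge> 1" and k: "k = 4 * m^2 * (L + 1)" and L: "nrow < 2^L"
  shows "\<exists>t. (\<forall>l<k. t l < ncol) \<and>
     (\<forall>i<nrow. 0 \<le> mat_vec A ncol x i \<longrightarrow> - real k \<le> real m * (\<Sum>l<k. A i (t l)))"
proof -
  define G where "G = {i. i < nrow \<and> 0 \<le> mat_vec A ncol x i}"
  define Bad where "Bad i = {t \<in> {..<k} \<rightarrow>\<^sub>E {..<ncol}. real m * (\<Sum>l<k. A i (t l)) < - real k}" for i
  have "\<exists>t \<in> {..<k} \<rightarrow>\<^sub>E {..<ncol}. \<forall>i\<in>G. t \<notin> Bad i"
  proof (rule union_bound_avoid[where \<delta> = "exp (- real (L + 1))"])
    fix i assume "i \<in> G"
    then have "sum (tuple_weight x k) (Bad i) \<le> exp (- real k / (4 * real m^2))"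
      using m A unfolding Bad_def G_def mat_vec_def by (intro tuple_weight_lower_tail[OF x]) auto
    moreover have "real k / (4 * real m^2) = real (L + 1)" using m unfolding k by (simp add: field_simps)
    ultimately show "sum (tuple_weight x k) (Bad i) \<le> exp (- real (L + 1))" by simp
  next
    have "card G \<le> card {..<nrow}" unfolding G_def by (intro card_mono) auto
    then have "real (card G) \<le> real nrow" by simp
    also have "\<dots> < 2 ^ L" using L by (metis of_nat_less_numeral_power_cancel_iff)
    also have "(2::real) ^ L \<le> exp 1 ^ L"
      using exp_ge_add_one_self[of 1] by (intro power_mono) auto
    also have "\<dots> < exp (real (L + 1))" by (simp add: exp_of_nat_mult[symmetric])
    finally show "real (card G) * exp (- real (L + 1)) < 1"
      by (simp only: exp_minus) (simp add: field_simps)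
  qed (auto simp: Bad_def G_def finite_PiE sum_tuple_weight[OF x] tuple_weight_nonneg[OF x])
  then show ?thesis unfolding Bad_def G_def by (fastforce simp: PiE_def not_less)
qed

lemma unit_vector_in_prob_simplex: "0 < n \<Longrightarrow> (\<lambda>j. if j = 0 then 1 else 0) \<in> prob_simplex n"
  unfolding prob_simplex_def by (simp add: sum.delta)

lemma mfs_opt_attained:
  assumes "ncol \<ge> 1"
  shows "\<exists>y \<in> prob_simplex ncol. mfs_opt A nrow ncol = num_feasible A nrow ncol 0 y"
proof -
  let ?S = "{num_feasible A nrow ncol 0 y | y. y \<in> prob_simplex ncol}"
  have "num_feasible A nrow ncol 0 y \<le> card {..<nrow}" for y
    unfolding num_feasible_def by (rule card_mono) auto
  then have "?S \<subseteq> {..nrow}" by auto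
  moreover have "?S \<noteq> {}" using unit_vector_in_prob_simplex[of ncol] assms by auto
  ultimately have "Max ?S \<in> ?S" by (intro Max_in) (auto intro: finite_subset)
  then show ?thesis unfolding mfs_opt_def by auto
qed

lemma card_filter_less_Suc:
  "card {i. i < Suc n \<and> p i} = card {i. i < n \<and> p i} + (if p n then 1 else 0)"
proof -
  have "{i. i < Suc n \<and> p i} = (if p n then insert n {i. i < n \<and> p i} else {i. i < n \<and> p i})"
    by (auto simp: less_Suc_eq)
  then show ?thesis by simp
qed

lemma sum_card_fibres:
  fixes b :: "nat \<Rightarrow> nat" and f :: "nat \<Rightarrow> real"
  assumes "\<forall>l<K. b l < n"
  shows "(\<Sum>j<n. f j * real (card {l. l < K \<and> b l = j})) = (\<Sum>l<K. f (b l))"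
  using assms
proof (induction K)
  case 0
  then show ?case by simp
next
  case (Suc K)
  have "f j * real (card {l. l < Suc K \<and> b l = j})
      = f j * real (card {l. l < K \<and> b l = j}) + (if b K = j then f j else 0)" for j
    by (simp add: card_filter_less_Suc algebra_simps)
  then have "(\<Sum>j<n. f j * real (card {l. l < Suc K \<and> b l = j}))
      = (\<Sum>j<n. f j * real (card {l. l < K \<and> b l = j})) + f (b K)"
    using Suc.prems by (simp add: sum.distrib sum.delta)
  then show ?case using Suc by simp
qed

section \<open>Base-\<open>n\<close> digit strings\<close>

definition digit_value :: "nat \<Rightarrow> nat \<Rightarrow> (nat \<Rightarrow> nat) \<Rightarrow> nat" where
  "digit_value n K s = (\<Sum>l<K. s l * n^l)"

lemma sum_max_digits: "n \<ge> 1 \<Longrightarrow> (\<Sum>l<j. (n - 1) * n^l) + 1 = (n::nat)^j"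
proof (induction j)
  case (Suc j)
  have "(\<Sum>l<Suc j. (n - 1) * n^l) + 1 = ((\<Sum>l<j. (n - 1) * n^l) + 1) + (n - 1) * n^j" by simp
  also have "\<dots> = n^j + (n - 1) * n^j" using Suc by simp
  also have "\<dots> = n * n^j" using Suc.prems by (cases n) auto
  finally show ?case by simp
qed simp

lemma digit_value_all_max:
  assumes "n \<ge> 1" "\<forall>l<K. s l = n - 1"
  shows "digit_value n K s + 1 = n^K"
  unfolding digit_value_def using sum_max_digits[of n K] assms
  by (metis (no_types, lifting) lessThan_iff mult.commute sum.cong)

lemma digit_value_increment:
  assumes n: "n \<ge> 1" and l0: "l0 < K" and low: "\<forall>l<l0. s l = n - 1"
  shows "digit_value n K (\<lambda>l. if l < l0 then 0 else if l = l0 then s l0 + 1 else s l)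
    = digit_value n K s + 1"
  using l0
proof (induction K)
  case 0
  then show ?case by simp
next
  case (Suc K)
  show ?case
  proof (cases "l0 < K")
    case True
    then show ?thesis using Suc.IH by (simp add: digit_value_def)
  next
    case False
    then have K: "K = l0" using Suc.prems by simp
    have "(\<Sum>l<l0. s l * n^l) + 1 = n^l0"
      using digit_value_all_max[OF n low] by (simp add: digit_value_def)
    then show ?thesis unfolding digit_value_def K by (simp add: algebra_simps)
  qed
qed

lemma digit_value_less: "\<forall>l<K. s l < n \<Longrightarrow> digit_value n K s < n^K"
proof (induction K)
  case 0
  then show ?case by (simp add: digit_value_def)
next
  case (Suc K)
  have "digit_value n (Suc K) s = digit_value n K s + s K * n^K" by (simp add: digit_value_def)
  also have "\<dots> < n^K + s K * n^K" using Suc by simp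
  also have "\<dots> = (s K + 1) * n^K" by simp
  also have "\<dots> \<le> n * n^K" using Suc.prems by (intro mult_right_mono) auto
  finally show ?case by simp
qed

lemma digit_value_inj:
  assumes "\<forall>l<K. s l < n" "\<forall>l<K. t l < n" "digit_value n K s = digit_value n K t"
  shows "\<forall>l<K. s l = t l"
  using assms
proof (induction K)
  case 0
  then show ?case by simp
next
  case (Suc K)
  have hs: "digit_value n (Suc K) s = digit_value n K s + s K * n^K"
    and ht: "digit_value n (Suc K) t = digit_value n K t + t K * n^K"
    by (simp_all add: digit_value_def)
  have ls: "digit_value n K s < n^K" and lt: "digit_value n K t < n^K"
    using Suc.prems by (auto intro!: digit_value_less)
  moreover have "n^K \<noteq> 0" using ls by (metis less_nat_zero_code)
  ultimately have "digit_value n (Suc K) s div n^K = s K" "digit_value n (Suc K) s mod n^K = digit_value n K s"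
    "digit_value n (Suc K) t div n^K = t K" "digit_value n (Suc K) t mod n^K = digit_value n K t"
    unfolding hs ht by (auto simp: div_mult_self1)
  then have "s K = t K" "digit_value n K s = digit_value n K t" using Suc.prems(3) by simp_all
  moreover from this(2) have "\<forall>l<K. s l = t l" using Suc.IH Suc.prems(1,2) by simp
  ultimately show ?case by (auto simp: less_Suc_eq)
qed

section \<open>Runs of a real RAM\<close>

lemma run_0 [simp]: "run P 0 s = s"
  by (simp add: run_def)

lemma run_Suc: "run P (Suc n) s = run P n (step P s)"
  unfolding run_def funpow_Suc_right by simp

lemma run_Suc_0 [simp]: "run P (Suc 0) s = step P s"
  by (simp add: run_def)

lemma run_1 [simp]: "run P 1 s = step P s"
  by (simp add: run_def)

lemma run_numeral [simp]: "run P (numeral n) s = run P (pred_numeral n) (step P s)"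
  by (simp add: numeral_eq_Suc run_Suc)

lemma run_add: "run P (a + b) s = run P b (run P a s)"
  unfolding run_def by (metis add.commute funpow_add comp_apply)

definition reaches :: "instr list \<Rightarrow> state \<Rightarrow> (state \<Rightarrow> bool) \<Rightarrow> nat \<Rightarrow> bool" where
  "reaches P s Q T \<longleftrightarrow> (\<exists>t\<le>T. Q (run P t s))"

lemma reaches_intro: "Q (run P n s) \<Longrightarrow> n \<le> T \<Longrightarrow> reaches P s Q T"
  by (auto simp: reaches_def)

lemma reaches_mono:
  "reaches P s Q T \<Longrightarrow> T \<le> T' \<Longrightarrow> (\<And>s. Q s \<Longrightarrow> Q' s) \<Longrightarrow> reaches P s Q' T'"
  unfolding reaches_def by (meson le_trans)

lemma reaches_trans:
  assumes "reaches P s Q1 T1" and "\<And>s'. Q1 s' \<Longrightarrow> reaches P s' Q2 T2"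
  shows "reaches P s Q2 (T1 + T2)"
proof -
  obtain t1 where t1: "t1 \<le> T1" "Q1 (run P t1 s)"
    using assms(1) by (auto simp: reaches_def)
  obtain t2 where t2: "t2 \<le> T2" "Q2 (run P t2 (run P t1 s))"
    using assms(2)[OF t1(2)] by (auto simp: reaches_def)
  show ?thesis
    unfolding reaches_def using t1 t2 by (intro exI[of _ "t1 + t2"]) (auto simp: run_add)
qed

lemma reaches_loop:
  assumes body: "\<And>n s. Inv (Suc n) s \<Longrightarrow> reaches P s (Inv n) c"
    and exit: "\<And>s. Inv 0 s \<Longrightarrow> reaches P s Q d"
  shows "Inv n s \<Longrightarrow> reaches P s Q (n * c + d)"
proof (induction n arbitrary: s)
  case 0
  then show ?case using exit by simp
next
  case (Suc n)
  have "reaches P s Q (c + (n * c + d))"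
    by (rule reaches_trans[OF body[OF Suc.prems] Suc.IH])
  then show ?case by (simp add: add.assoc)
qed

lemma state_caseE:
  "(case st of (pc, I, R) \<Rightarrow> Q pc I R) \<Longrightarrow> \<exists>pc I R. st = (pc, I, R) \<and> Q pc I R"
  by (cases st) auto

definition agree_except :: "nat set \<Rightarrow> (nat \<Rightarrow> 'a) \<Rightarrow> (nat \<Rightarrow> 'a) \<Rightarrow> bool" where
  "agree_except S f g \<longleftrightarrow> (\<forall>a. a \<notin> S \<longrightarrow> f a = g a)"

section \<open>The enumeration program\<close>

text \<open>The algorithm enumerates all \<open>k\<close>-tuples of column indices (as an odometer in
  base \<open>n_col\<close>, least significant digit first), scores each tuple \<open>t\<close> by the number of
  rows \<open>i\<close> with \<open>m * (\<Sum>l<k. A i (t l)) \<ge> -k\<close>, and outputs the empirical distribution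
  of a best tuple. If \<open>n_row = 0\<close> it outputs the first unit vector.

  Integer registers: 0, 1 hold \<open>n_row\<close>, \<open>n_col\<close>; 2 holds \<open>N = n_row * n_col\<close>, 3 holds
  \<open>N + 8\<close>, 4 holds \<open>k\<close>, 8 the score of the current tuple, 9 the best score so far
  (initially -1), 11 the end \<open>100 + 2 k\<close> of the tuple area, 12 the address of the current
  row, 13, 14, 15 the constants 0, 2, 1 (so \<open>IJmpLe 13 13 l\<close> is an unconditional jump),
  16 holds \<open>4 m\<^sup>2\<close>, 17 powers of two, 18 holds \<open>-k\<close>, 19 holds 100, 20 the histogram base,
  21 holds \<open>n_row + 1\<close>; registers 5, 6, 7, 10 are counters and pointers. Digit \<open>l\<close> of
  the current tuple is in register \<open>100 + 2 l\<close>, that of the best tuple in \<open>101 + 2 l\<close>.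

  Real registers: 2 and 3 hold \<open>m\<close> and \<open>-k\<close>, 0, 1, 4, 5, 6 are scratch. The matrix is
  first copied to \<open>N + 8, \<dots>, 2 N + 7\<close>, because the scratch and output registers overlap
  the input; the histogram is accumulated from \<open>2 N + 8 + n_col\<close> on and finally copied
  to the output registers \<open>0, \<dots>, n_col - 1\<close>.\<close>

definition mfs_prog :: "nat \<Rightarrow> instr list" where
  "mfs_prog m = [IJmpLe 0 13 94,
    IConst 15 1,
    IConst 16 (int (4*m^2)),
    IConst 19 100,
    IConst 14 2,
    IConst 5 0,
    IJmpLe 0 5 10,
    IAdd 2 2 1,
    IAdd 5 5 15,
    IJmpLe 13 13 6,
    IConst 7 8,
    IAdd 3 2 7,
    IConst 5 0,
    IJmpLe 2 5 19,
    RLoad 0 5,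
    IAdd 6 3 5,
    RStore 6 0,
    IAdd 5 5 15,
    IJmpLe 13 13 13,
    IAdd 4 16 13,
    IConst 17 1,
    IAdd 21 0 15,
    IJmpLe 21 17 26,
    IAdd 17 17 17,
    IAdd 4 4 16,
    IJmpLe 13 13 22,
    IAdd 11 4 4,
    IAdd 11 11 19,
    ISub 18 13 4,
    RConst 2 (int m),
    OfInt 3 18,
    IConst 9 (-1),
    IAdd 20 3 2,
    IAdd 20 20 1,
    IConst 8 0,
    IConst 5 0,
    IAdd 12 3 13,
    IJmpLe 0 5 54,
    RConst 1 0,
    IAdd 10 19 13,
    IJmpLe 11 10 47,
    ILoad 7 10,
    IAdd 6 12 7,
    RLoad 0 6,
    RAdd 1 1 0,
    IAdd 10 10 14,
    IJmpLe 13 13 40,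
    RMul 4 2 1,
    RJmpLe 3 4 50,
    IJmpLe 13 13 51,
    IAdd 8 8 15,
    IAdd 5 5 15,
    IAdd 12 12 1,
    IJmpLe 13 13 37,
    IJmpLe 8 9 63,
    IAdd 9 8 13,
    IAdd 10 19 13,
    IJmpLe 11 10 63,
    ILoad 7 10,
    IAdd 6 10 15,
    IStore 6 7,
    IAdd 10 10 14,
    IJmpLe 13 13 57,
    IAdd 10 19 13,
    IJmpLe 11 10 73,
    ILoad 7 10,
    IAdd 7 7 15,
    IJmpLe 1 7 70,
    IStore 10 7,
    IJmpLe 13 13 34,
    IStore 10 13,
    IAdd 10 10 14,
    IJmpLe 13 13 64,
    RConst 5 1,
    OfInt 6 4,
    RDiv 5 5 6,
    IAdd 10 19 13,
    IJmpLe 11 10 86,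
    IAdd 6 10 15,
    ILoad 7 6,
    IAdd 6 20 7,
    RLoad 0 6,
    RAdd 0 0 5,
    RStore 6 0,
    IAdd 10 10 14,
    IJmpLe 13 13 77,
    IAdd 5 1 13,
    IJmpLe 5 13 93,
    ISub 5 5 15,
    IAdd 6 20 5,
    RLoad 0 6,
    RStore 5 0,
    IJmpLe 13 13 87,
    Halt,
    RConst 0 1,
    Halt]"

lemma length_mfs_prog [simp]: "length (mfs_prog m) = 96" by (simp add: mfs_prog_def)

lemma mfs_prog_nth [simp]:
  "mfs_prog m ! 0 = IJmpLe 0 13 94"
  "mfs_prog m ! 1 = IConst 15 1"
  "mfs_prog m ! Suc 0 = IConst 15 1"
  "mfs_prog m ! 2 = IConst 16 (int (4*m^2))"
  "mfs_prog m ! 3 = IConst 19 100"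
  "mfs_prog m ! 4 = IConst 14 2"
  "mfs_prog m ! 5 = IConst 5 0"
  "mfs_prog m ! 6 = IJmpLe 0 5 10"
  "mfs_prog m ! 7 = IAdd 2 2 1"
  "mfs_prog m ! 8 = IAdd 5 5 15"
  "mfs_prog m ! 9 = IJmpLe 13 13 6"
  "mfs_prog m ! 10 = IConst 7 8"
  "mfs_prog m ! 11 = IAdd 3 2 7"
  "mfs_prog m ! 12 = IConst 5 0"
  "mfs_prog m ! 13 = IJmpLe 2 5 19"
  "mfs_prog m ! 14 = RLoad 0 5"
  "mfs_prog m ! 15 = IAdd 6 3 5"
  "mfs_prog m ! 16 = RStore 6 0"
  "mfs_prog m ! 17 = IAdd 5 5 15"
  "mfs_prog m ! 18 = IJmpLe 13 13 13"
  "mfs_prog m ! 19 = IAdd 4 16 13"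
  "mfs_prog m ! 20 = IConst 17 1"
  "mfs_prog m ! 21 = IAdd 21 0 15"
  "mfs_prog m ! 22 = IJmpLe 21 17 26"
  "mfs_prog m ! 23 = IAdd 17 17 17"
  "mfs_prog m ! 24 = IAdd 4 4 16"
  "mfs_prog m ! 25 = IJmpLe 13 13 22"
  "mfs_prog m ! 26 = IAdd 11 4 4"
  "mfs_prog m ! 27 = IAdd 11 11 19"
  "mfs_prog m ! 28 = ISub 18 13 4"
  "mfs_prog m ! 29 = RConst 2 (int m)"
  "mfs_prog m ! 30 = OfInt 3 18"
  "mfs_prog m ! 31 = IConst 9 (-1)"
  "mfs_prog m ! 32 = IAdd 20 3 2"
  "mfs_prog m ! 33 = IAdd 20 20 1"
  "mfs_prog m ! 34 = IConst 8 0"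
  "mfs_prog m ! 35 = IConst 5 0"
  "mfs_prog m ! 36 = IAdd 12 3 13"
  "mfs_prog m ! 37 = IJmpLe 0 5 54"
  "mfs_prog m ! 38 = RConst 1 0"
  "mfs_prog m ! 39 = IAdd 10 19 13"
  "mfs_prog m ! 40 = IJmpLe 11 10 47"
  "mfs_prog m ! 41 = ILoad 7 10"
  "mfs_prog m ! 42 = IAdd 6 12 7"
  "mfs_prog m ! 43 = RLoad 0 6"
  "mfs_prog m ! 44 = RAdd 1 1 0"
  "mfs_prog m ! 45 = IAdd 10 10 14"
  "mfs_prog m ! 46 = IJmpLe 13 13 40"
  "mfs_prog m ! 47 = RMul 4 2 1"
  "mfs_prog m ! 48 = RJmpLe 3 4 50"
  "mfs_prog m ! 49 = IJmpLe 13 13 51"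
  "mfs_prog m ! 50 = IAdd 8 8 15"
  "mfs_prog m ! 51 = IAdd 5 5 15"
  "mfs_prog m ! 52 = IAdd 12 12 1"
  "mfs_prog m ! 53 = IJmpLe 13 13 37"
  "mfs_prog m ! 54 = IJmpLe 8 9 63"
  "mfs_prog m ! 55 = IAdd 9 8 13"
  "mfs_prog m ! 56 = IAdd 10 19 13"
  "mfs_prog m ! 57 = IJmpLe 11 10 63"
  "mfs_prog m ! 58 = ILoad 7 10"
  "mfs_prog m ! 59 = IAdd 6 10 15"
  "mfs_prog m ! 60 = IStore 6 7"
  "mfs_prog m ! 61 = IAdd 10 10 14"
  "mfs_prog m ! 62 = IJmpLe 13 13 57"
  "mfs_prog m ! 63 = IAdd 10 19 13"
  "mfs_prog m ! 64 = IJmpLe 11 10 73"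
  "mfs_prog m ! 65 = ILoad 7 10"
  "mfs_prog m ! 66 = IAdd 7 7 15"
  "mfs_prog m ! 67 = IJmpLe 1 7 70"
  "mfs_prog m ! 68 = IStore 10 7"
  "mfs_prog m ! 69 = IJmpLe 13 13 34"
  "mfs_prog m ! 70 = IStore 10 13"
  "mfs_prog m ! 71 = IAdd 10 10 14"
  "mfs_prog m ! 72 = IJmpLe 13 13 64"
  "mfs_prog m ! 73 = RConst 5 1"
  "mfs_prog m ! 74 = OfInt 6 4"
  "mfs_prog m ! 75 = RDiv 5 5 6"
  "mfs_prog m ! 76 = IAdd 10 19 13"
  "mfs_prog m ! 77 = IJmpLe 11 10 86"
  "mfs_prog m ! 78 = IAdd 6 10 15"
  "mfs_prog m ! 79 = ILoad 7 6"
  "mfs_prog m ! 80 = IAdd 6 20 7"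
  "mfs_prog m ! 81 = RLoad 0 6"
  "mfs_prog m ! 82 = RAdd 0 0 5"
  "mfs_prog m ! 83 = RStore 6 0"
  "mfs_prog m ! 84 = IAdd 10 10 14"
  "mfs_prog m ! 85 = IJmpLe 13 13 77"
  "mfs_prog m ! 86 = IAdd 5 1 13"
  "mfs_prog m ! 87 = IJmpLe 5 13 93"
  "mfs_prog m ! 88 = ISub 5 5 15"
  "mfs_prog m ! 89 = IAdd 6 20 5"
  "mfs_prog m ! 90 = RLoad 0 6"
  "mfs_prog m ! 91 = RStore 5 0"
  "mfs_prog m ! 92 = IJmpLe 13 13 87"
  "mfs_prog m ! 93 = Halt"
  "mfs_prog m ! 94 = RConst 0 1"
  "mfs_prog m ! 95 = Halt"
  by (simp_all add: mfs_prog_def)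

lemma step_mfs_prog [simp]:
  "pc < 96 \<Longrightarrow> step (mfs_prog m) (pc, I, R) = exec (mfs_prog m ! pc) (pc, I, R)"
  by (simp add: step_def halted_def)

lemma nat_int_add_numeral [simp]: "nat (int a + numeral b) = a + numeral b"
  by (simp add: nat_add_distrib)

declare nat_int_add [simp] numeral_2_eq_2 [symmetric, simp]

definition agree_scalars_except :: "nat set \<Rightarrow> (nat \<Rightarrow> int) \<Rightarrow> (nat \<Rightarrow> int) \<Rightarrow> bool" where
  "agree_scalars_except S f g \<longleftrightarrow> (\<forall>a<100. a \<notin> S \<longrightarrow> f a = g a)"

lemma current_reg_ne_best_reg [simp]: "100 + 2 * l \<noteq> 101 + 2 * (l'::nat)"
  by presburger

lemma best_reg_ne_current_reg [simp]: "101 + 2 * l \<noteq> 100 + 2 * (l'::nat)"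
  by presburger

lemma nat_int_add_1 [simp]: "nat (int a + 1) = a + 1"
  by simp

locale mfs_run =
  fixes m nrow ncol :: nat and A :: "nat \<Rightarrow> nat \<Rightarrow> real"
  assumes m1: "m \<ge> 1" and ncol1: "ncol \<ge> 1"
begin

abbreviation P :: "instr list" where "P \<equiv> mfs_prog m"

definition N :: nat where "N = nrow * ncol"
definition L :: nat where "L = (LEAST l. nrow < 2^l)"
definition k :: nat where "k = 4 * m^2 * (L + 1)"
definition tuple_end :: nat where "tuple_end = 100 + 2 * k"
definition hist_base :: nat where "hist_base = 2 * N + 8 + ncol"

lemma nrow_less_2_pow_L: "nrow < 2^L"
  unfolding L_def by (rule LeastI[of _ nrow]) (rule less_exp)

lemma pow_2_le_nrow: "j < L \<Longrightarrow> 2^j \<le> nrow"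
  unfolding L_def using not_less_Least by (metis not_le)

lemma k_pos: "k \<ge> 1"
  using m1 unfolding k_def by (simp add: Suc_le_eq)

definition iregs_ok :: "(nat \<Rightarrow> int) \<Rightarrow> bool" where
  "iregs_ok I \<longleftrightarrow> I 0 = int nrow \<and> I 1 = int ncol \<and> I 3 = int N + 8 \<and> I 4 = int k
     \<and> I 11 = int tuple_end \<and> I 13 = 0 \<and> I 14 = 2 \<and> I 15 = 1 \<and> I 19 = 100 \<and> I 18 = - int k
     \<and> I 20 = int hist_base"

definition rregs_ok :: "(nat \<Rightarrow> real) \<Rightarrow> bool" where
  "rregs_ok R \<longleftrightarrow> R 2 = real m \<and> R 3 = - real k
     \<and> (\<forall>i<nrow. \<forall>j<ncol. R (N + 8 + i * ncol + j) = A i j) \<and> (\<forall>j<ncol. R (hist_base + j) = 0)"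

definition stores_current :: "(nat \<Rightarrow> int) \<Rightarrow> (nat \<Rightarrow> nat) \<Rightarrow> bool" where
  "stores_current I s \<longleftrightarrow> (\<forall>l<k. I (100 + 2 * l) = int (s l))"

definition stores_best :: "(nat \<Rightarrow> int) \<Rightarrow> (nat \<Rightarrow> nat) \<Rightarrow> bool" where
  "stores_best I s \<longleftrightarrow> (\<forall>l<k. I (101 + 2 * l) = int (s l))"

definition col_tuple :: "(nat \<Rightarrow> nat) \<Rightarrow> bool" where
  "col_tuple s \<longleftrightarrow> (\<forall>l<k. s l < ncol)"

definition row_sum :: "(nat \<Rightarrow> nat) \<Rightarrow> nat \<Rightarrow> real" where
  "row_sum s i = (\<Sum>l<k. A i (s l))"

definition score :: "(nat \<Rightarrow> nat) \<Rightarrow> nat" where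
  "score s = card {i. i < nrow \<and> - real k \<le> real m * row_sum s i}"

lemma phase_matrix_size:
  assumes I0: "I 0 = int nrow" "I 1 = int ncol" "I 13 = 0" "I 2 = 0" and nr: "nrow \<ge> 1"
  shows "reaches P (0, I, R) (\<lambda>(pc, I', R'). pc = 12 \<and> I' 2 = int N \<and> I' 3 = int N + 8
     \<and> I' 14 = 2 \<and> I' 15 = 1 \<and> I' 16 = int (4 * m^2) \<and> I' 19 = 100
     \<and> agree_except {2, 3, 5, 7, 14, 15, 16, 19} I' I \<and> R' = R) (6 + (nrow * 4 + 3))"
    (is "reaches _ _ ?Q _")
proof -
  define I1 where "I1 = I(15 := 1, 16 := int (4 * m^2), 19 := 100, 14 := 2, 5 := 0)"
  have init: "reaches P (0, I, R) (\<lambda>s. s = (6::nat, I1, R)) 6"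
    by (rule reaches_intro[where n=6]) (use nr I0 in \<open>simp_all add: I1_def\<close>)
  define Inv where "Inv n s \<longleftrightarrow> (\<exists>I' i. s = (6::nat, I', R) \<and> i + n = nrow \<and> I' 5 = int i
      \<and> I' 2 = int (i * ncol) \<and> agree_except {2, 5} I' I1)" for n s
  have loop: "reaches P s ?Q (nrow * 4 + 3)" if "Inv nrow s" for s
  proof (rule reaches_loop[where Inv=Inv and c=4 and d=3])
    fix n s assume "Inv (Suc n) s"
    then obtain I' i where st: "s = (6, I', R)" "i + Suc n = nrow" "I' 5 = int i"
      "I' 2 = int (i * ncol)" "agree_except {2, 5} I' I1" unfolding Inv_def by blast
    have "I' 0 = int nrow" "I' 1 = int ncol" "I' 15 = 1" "I' 13 = 0"
      using st(5) I0 unfolding agree_except_def I1_def by auto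
    then show "reaches P s (Inv n) 4"
      using st by (intro reaches_intro[where n=4])
        (auto simp: Inv_def agree_except_def algebra_simps intro!: exI[of _ "Suc i"])
  next
    fix s assume "Inv 0 s"
    then obtain I' where st: "s = (6, I', R)" "I' 5 = int nrow"
      "I' 2 = int (nrow * ncol)" "agree_except {2, 5} I' I1" unfolding Inv_def by auto
    have "I' 0 = int nrow" "I' 1 = int ncol" "I' 15 = 1" "I' 13 = 0" "I' 14 = 2"
      "I' 16 = int (4 * m^2)" "I' 19 = 100"
      using st(4) I0 unfolding agree_except_def I1_def by auto
    then show "reaches P s ?Q 3"
      using st by (intro reaches_intro[where n=3]) (simp_all add: agree_except_def I1_def N_def)
  qed (rule that)
  show ?thesis
    by (rule reaches_trans[OF init]) (rule loop, use I0 in \<open>simp add: Inv_def agree_except_def I1_def\<close>)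
qed

lemma phase_copy_matrix:
  assumes I0: "I 2 = int N" "I 3 = int N + 8" "I 15 = 1" "I 13 = 0"
  shows "reaches P (12, I, R) (\<lambda>(pc, I', R'). pc = 19 \<and> agree_except {5, 6} I' I
      \<and> (\<forall>a<N. R' (N + 8 + a) = R a) \<and> (\<forall>a. 2 * N + 8 \<le> a \<longrightarrow> R' a = R a)) (1 + (N * 6 + 1))"
    (is "reaches _ _ ?Q _")
proof -
  have init: "reaches P (12, I, R) (\<lambda>s. s = (13::nat, I(5 := 0), R)) 1"
    by (rule reaches_intro[where n=1]) simp_all
  define Inv where "Inv n s \<longleftrightarrow> (\<exists>I' R' a0. s = (13::nat, I', R') \<and> a0 + n = N \<and> I' 5 = int a0
      \<and> agree_except {5, 6} I' I \<and> (\<forall>a. a0 \<le> a \<and> a < N \<longrightarrow> R' a = R a)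
      \<and> (\<forall>a<a0. R' (N + 8 + a) = R a) \<and> (\<forall>a. 2 * N + 8 \<le> a \<longrightarrow> R' a = R a))" for n s
  have loop: "reaches P s ?Q (N * 6 + 1)" if "Inv N s" for s
  proof (rule reaches_loop[where Inv=Inv and c=6 and d=1])
    fix n s assume "Inv (Suc n) s"
    then obtain I' R' a0 where st: "s = (13, I', R')" "a0 + Suc n = N" "I' 5 = int a0"
      "agree_except {5, 6} I' I" "\<forall>a. a0 \<le> a \<and> a < N \<longrightarrow> R' a = R a"
      "\<forall>a<a0. R' (N + 8 + a) = R a" "\<forall>a. 2 * N + 8 \<le> a \<longrightarrow> R' a = R a"
      unfolding Inv_def by blast
    have "I' 2 = int N" "I' 3 = int N + 8" "I' 15 = 1" "I' 13 = 0"
      using st(4) I0 unfolding agree_except_def by auto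
    then show "reaches P s (Inv n) 6"
      using st by (intro reaches_intro[where n=6])
        (auto simp: Inv_def nat_add_distrib agree_except_def less_Suc_eq intro!: exI[of _ "Suc a0"])
  next
    fix s assume "Inv 0 s"
    then obtain I' R' where st: "s = (13, I', R')" "I' 5 = int N" "agree_except {5, 6} I' I"
      "\<forall>a<N. R' (N + 8 + a) = R a" "\<forall>a. 2 * N + 8 \<le> a \<longrightarrow> R' a = R a"
      unfolding Inv_def by auto
    have "I' 2 = int N" using st(3) I0 unfolding agree_except_def by auto
    then show "reaches P s ?Q 1"
      using st by (intro reaches_intro[where n=1]) simp_all
  qed (rule that)
  show ?thesis
    by (rule reaches_trans[OF init]) (rule loop, simp add: Inv_def agree_except_def)
qed

text \<open>The loop doubles register 17 until it exceeds \<open>n_row\<close>, adding \<open>4 m\<^sup>2\<close> to register 4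
  each time; it thus computes \<open>k = 4 m\<^sup>2 (L + 1)\<close> without any multiplication.\<close>

lemma phase_sample_size:
  assumes I0: "I 0 = int nrow" "I 1 = int ncol" "I 13 = 0" "I 15 = 1" "I 16 = int (4 * m^2)"
    "I 19 = 100" "I 2 = int N" "I 3 = int N + 8"
  shows "reaches P (19, I, R) (\<lambda>(pc, I', R'). pc = 34 \<and> I' 4 = int k \<and> I' 11 = int tuple_end
     \<and> I' 18 = - int k \<and> I' 9 = -1 \<and> I' 20 = int hist_base \<and> R' 2 = real m \<and> R' 3 = - real k
     \<and> agree_except {4, 9, 11, 17, 18, 20, 21} I' I \<and> agree_except {2, 3} R' R) (3 + (L * 4 + 9))"
    (is "reaches _ _ ?Q _")
proof -
  define I2 where "I2 = I(4 := int (4 * m^2), 17 := 1, 21 := int nrow + 1)"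
  have init: "reaches P (19, I, R) (\<lambda>s. s = (22::nat, I2, R)) 3"
    by (rule reaches_intro[where n=3]) (simp_all add: I2_def I0)
  define Inv where "Inv n s \<longleftrightarrow> (\<exists>I' j. s = (22::nat, I', R) \<and> j + n = L \<and> I' 17 = 2^j
      \<and> I' 4 = int (4 * m^2 * (j + 1)) \<and> agree_except {4, 17} I' I2)" for n s
  have loop: "reaches P s ?Q (L * 4 + 9)" if "Inv L s" for s
  proof (rule reaches_loop[where Inv=Inv and c=4 and d=9])
    fix n s assume "Inv (Suc n) s"
    then obtain I' j where st: "s = (22, I', R)" "j + Suc n = L" "I' 17 = 2^j"
      "I' 4 = int (4 * m^2 * (j + 1))" "agree_except {4, 17} I' I2" unfolding Inv_def by blast
    have f: "I' 21 = int nrow + 1" "I' 16 = int (4 * m^2)" "I' 13 = 0"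
      using st(5) I0 unfolding agree_except_def I2_def by auto
    have "2^j \<le> nrow" using pow_2_le_nrow st(2) by simp
    then have "\<not> int nrow + 1 \<le> 2^j"
      by (metis (mono_tags) add1_zle_eq not_less of_nat_le_iff of_nat_numeral of_nat_power)
    then show "reaches P s (Inv n) 4"
      using st f by (intro reaches_intro[where n=4])
        (auto simp: Inv_def agree_except_def algebra_simps intro!: exI[of _ "Suc j"])
  next
    fix s assume "Inv 0 s"
    then obtain I' where st: "s = (22, I', R)" "I' 17 = 2^L"
      "I' 4 = int k" "agree_except {4, 17} I' I2" unfolding Inv_def k_def by auto
    have f: "I' 21 = int nrow + 1" "I' 16 = int (4 * m^2)" "I' 13 = 0" "I' 19 = 100"
      "I' 2 = int N" "I' 3 = int N + 8" "I' 1 = int ncol"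
      using st(4) I0 unfolding agree_except_def I2_def by auto
    have "int nrow + 1 \<le> 2^L"
      using nrow_less_2_pow_L by (metis (mono_tags) add1_zle_eq of_nat_less_iff of_nat_numeral of_nat_power)
    then show "reaches P s ?Q 9"
      using st f by (intro reaches_intro[where n=9])
        (simp_all add: tuple_end_def hist_base_def agree_except_def I2_def)
  qed (rule that)
  show ?thesis
    by (rule reaches_trans[OF init]) (rule loop, simp add: Inv_def agree_except_def I2_def)
qed

lemma phase_row_sum:
  assumes c: "iregs_ok I" "rregs_ok R" "stores_current I s" "col_tuple s" "i < nrow"
    and st: "I 10 = 100" "I 12 = int (N + 8 + i * ncol)" "R 1 = 0"
  shows "reaches P (40, I, R) (\<lambda>(pc, I', R'). pc = 47 \<and> agree_except {6, 7, 10} I' I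
     \<and> agree_except {0, 1} R' R \<and> R' 1 = row_sum s i) (k * 7 + 1)"
    (is "reaches _ _ ?Q _")
proof -
  define Inv where "Inv n st \<longleftrightarrow> (\<exists>I' R' l0. st = (40::nat, I', R') \<and> l0 + n = k
      \<and> I' 10 = int (100 + 2 * l0) \<and> R' 1 = (\<Sum>l<l0. A i (s l))
      \<and> agree_except {6, 7, 10} I' I \<and> agree_except {0, 1} R' R)" for n st
  show ?thesis
  proof (rule reaches_loop[where Inv=Inv and c=7 and d=1])
    fix n st assume "Inv (Suc n) st"
    then obtain I' R' l0 where h: "st = (40, I', R')" "l0 + Suc n = k" "I' 10 = int (100 + 2 * l0)"
      "R' 1 = (\<Sum>l<l0. A i (s l))" "agree_except {6, 7, 10} I' I" "agree_except {0, 1} R' R"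
      unfolding Inv_def by blast
    have l0: "l0 < k" using h(2) by simp
    then have "s l0 < ncol" using c(4) by (simp add: col_tuple_def)
    then have f: "I' 11 = int (100 + 2 * k)" "I' 12 = int (N + 8 + i * ncol)" "I' 13 = 0" "I' 14 = 2"
      "I' (100 + 2 * l0) = int (s l0)" "R' (N + 8 + i * ncol + s l0) = A i (s l0)"
      using h(5,6) c st l0
      by (auto simp: agree_except_def iregs_ok_def rregs_ok_def stores_current_def tuple_end_def)
    have "Inv n (run P 7 st)"
      using h f l0 by (simp add: Inv_def del: of_nat_add of_nat_mult)
        (rule exI[of _ "Suc l0"], auto simp: agree_except_def)
    then show "reaches P st (Inv n) 7" by (rule reaches_intro) simp
  next
    fix st assume "Inv 0 st"
    then obtain I' R' where h: "st = (40, I', R')" "I' 10 = int (100 + 2 * k)"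
      "R' 1 = row_sum s i" "agree_except {6, 7, 10} I' I" "agree_except {0, 1} R' R"
      unfolding Inv_def row_sum_def by auto
    have "I' 11 = int (100 + 2 * k)"
      using h c by (auto simp: agree_except_def iregs_ok_def tuple_end_def)
    then show "reaches P st ?Q 1"
      by (intro reaches_intro[where n=1]) (use h in simp_all)
  next
    show "Inv k (40, I, R)" unfolding Inv_def using st by (auto simp: agree_except_def)
  qed
qed

lemma phase_score_row:
  assumes c: "iregs_ok I" "rregs_ok R" "stores_current I s" "col_tuple s" and i0: "i0 < nrow"
    and h: "I' 5 = int i0" "I' 12 = int (N + 8 + i0 * ncol)" "I' 8 = int c"
      "agree_except {5, 6, 7, 8, 10, 12} I' I" "agree_except {0, 1, 4} R' R"
  shows "reaches P (37, I', R') (\<lambda>(pc, I'', R''). pc = 37 \<and> I'' 5 = int (Suc i0)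
     \<and> I'' 12 = int (N + 8 + Suc i0 * ncol)
     \<and> I'' 8 = int c + (if - real k \<le> real m * row_sum s i0 then 1 else 0)
     \<and> agree_except {5, 6, 7, 8, 10, 12} I'' I \<and> agree_except {0, 1, 4} R'' R) (k * 7 + 10)"
    (is "reaches _ _ ?Q _")
proof -
  have f: "I' 0 = int nrow" "I' 19 = 100" "I' 13 = 0"
    using h(4) c(1) by (auto simp: agree_except_def iregs_ok_def)
  define I1 where "I1 = I'(10 := 100)"
  define R1 where "R1 = R'(1 := 0)"
  have start: "reaches P (37, I', R') (\<lambda>x. x = (40::nat, I1, R1)) 3"
    by (rule reaches_intro[where n=3]) (use h f i0 in \<open>simp_all add: I1_def R1_def\<close>)
  have c1: "iregs_ok I1" "rregs_ok R1" "stores_current I1 s"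
    using c h(4,5) unfolding I1_def R1_def iregs_ok_def rregs_ok_def stores_current_def agree_except_def
    by (auto simp: hist_base_def)
  have sum: "reaches P (40, I1, R1) (\<lambda>(pc, I'', R''). pc = 47 \<and> agree_except {6, 7, 10} I'' I1
      \<and> agree_except {0, 1} R'' R1 \<and> R'' 1 = row_sum s i0) (k * 7 + 1)"
    (is "reaches _ _ ?Summed _")
    by (rule phase_row_sum[OF c1 c(4) i0]) (use h in \<open>simp_all add: I1_def R1_def\<close>)
  have compare: "reaches P st ?Q 6" if summed: "?Summed st" for st
  proof -
    obtain I'' R'' where g: "st = (47, I'', R'')" "agree_except {6, 7, 10} I'' I1"
      "agree_except {0, 1} R'' R1" "R'' 1 = row_sum s i0"
      using state_caseE[OF summed] by auto
    have f2: "R'' 2 = real m" "R'' 3 = - real k" "I'' 8 = int c" "I'' 5 = int i0" "I'' 13 = 0"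
      "I'' 15 = 1" "I'' 12 = int (N + 8 + i0 * ncol)" "I'' 1 = int ncol"
      using g h c unfolding I1_def R1_def agree_except_def iregs_ok_def rregs_ok_def by auto
    have "?Q (run P 6 st)"
      by (insert g f2 h(4,5), (cases "- real k \<le> real m * row_sum s i0";
          simp del: of_nat_add of_nat_mult; auto simp: agree_except_def I1_def R1_def))
    then show ?thesis by (rule reaches_intro) simp
  qed
  have "reaches P (37, I', R') ?Summed (3 + (k * 7 + 1))"
    by (rule reaches_trans[OF start]) (use sum in simp)
  then have "reaches P (37, I', R') ?Q (3 + (k * 7 + 1) + 6)"
    using compare by (rule reaches_trans)
  then show ?thesis by (rule reaches_mono) auto
qed

lemma phase_score:
  assumes c: "iregs_ok I" "rregs_ok R" "stores_current I s" "col_tuple s"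
  shows "reaches P (34, I, R) (\<lambda>(pc, I', R'). pc = 54 \<and> I' 8 = int (score s)
     \<and> agree_except {5, 6, 7, 8, 10, 12} I' I \<and> agree_except {0, 1, 4} R' R) (3 + (nrow * (k * 7 + 10) + 1))"
    (is "reaches _ _ ?Q _")
proof -
  define good where "good i \<longleftrightarrow> - real k \<le> real m * row_sum s i" for i
  define I0 where "I0 = I(8 := 0, 5 := 0, 12 := int (N + 8))"
  have init: "reaches P (34, I, R) (\<lambda>st. st = (37::nat, I0, R)) 3"
    by (rule reaches_intro[where n=3]) (use c in \<open>simp_all add: iregs_ok_def I0_def\<close>)
  define Inv where "Inv n st \<longleftrightarrow> (\<exists>I' R' i0. st = (37::nat, I', R') \<and> i0 + n = nrow
      \<and> I' 5 = int i0 \<and> I' 12 = int (N + 8 + i0 * ncol) \<and> I' 8 = int (card {i. i < i0 \<and> good i})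
      \<and> agree_except {5, 6, 7, 8, 10, 12} I' I \<and> agree_except {0, 1, 4} R' R)" for n st
  have loop: "reaches P st ?Q (nrow * (k * 7 + 10) + 1)" if "Inv nrow st" for st
  proof (rule reaches_loop[where Inv=Inv and c="k * 7 + 10" and d=1])
    fix n st assume "Inv (Suc n) st"
    then obtain I' R' i0 where h: "st = (37, I', R')" "i0 + Suc n = nrow" "I' 5 = int i0"
      "I' 12 = int (N + 8 + i0 * ncol)" "I' 8 = int (card {i. i < i0 \<and> good i})"
      "agree_except {5, 6, 7, 8, 10, 12} I' I" "agree_except {0, 1, 4} R' R"
      unfolding Inv_def by blast
    have i0: "i0 < nrow" using h(2) by simp
    show "reaches P st (Inv n) (k * 7 + 10)"
      unfolding h(1)
    proof (rule reaches_mono[OF phase_score_row[OF c i0 h(3-7)]])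
      fix st' :: state assume "(\<lambda>(pc, I'', R''). pc = 37 \<and> I'' 5 = int (Suc i0)
          \<and> I'' 12 = int (N + 8 + Suc i0 * ncol)
          \<and> I'' 8 = int (card {i. i < i0 \<and> good i})
            + (if - real k \<le> real m * row_sum s i0 then 1 else 0)
          \<and> agree_except {5, 6, 7, 8, 10, 12} I'' I \<and> agree_except {0, 1, 4} R'' R) st'"
      then show "Inv n st'"
        using h(2) unfolding Inv_def good_def
        by (auto simp: card_filter_less_Suc distrib_right intro!: exI[of _ "Suc i0"])
    qed simp
  next
    fix st assume "Inv 0 st"
    then obtain I' R' where h: "st = (37, I', R')" "I' 5 = int nrow" "I' 8 = int (score s)"
      "agree_except {5, 6, 7, 8, 10, 12} I' I" "agree_except {0, 1, 4} R' R"
      unfolding Inv_def score_def good_def by auto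
    have "I' 0 = int nrow" using h(4) c(1) by (auto simp: agree_except_def iregs_ok_def)
    then show "reaches P st ?Q 1"
      by (intro reaches_intro[where n=1]) (use h in simp_all)
  qed (rule that)
  have "Inv nrow (37::nat, I0, R)"
    unfolding Inv_def by (intro exI[of _ I0] exI[of _ R] exI[of _ 0]) (simp add: agree_except_def I0_def)
  then show ?thesis
    by (intro reaches_trans[OF init]) (use loop in simp)
qed

lemma phase_update_best:
  assumes c: "iregs_ok I" "stores_current I s" "I 8 = int c"
  shows "reaches P (54, I, R) (\<lambda>(pc, I', R'). pc = 63 \<and> R' = R \<and> stores_current I' s
     \<and> agree_scalars_except {6, 7, 9, 10} I' I \<and> I' 9 = max (I 9) (int c)
     \<and> (if int c \<le> I 9 then \<forall>l<k. I' (101 + 2 * l) = I (101 + 2 * l) else stores_best I' s))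
     (k * 6 + 4)"
    (is "reaches _ _ ?Q _")
proof (cases "int c \<le> I 9")
  case True
  have "reaches P (54, I, R) ?Q 1"
    by (rule reaches_intro[where n=1]) (use c True in \<open>simp_all add: agree_scalars_except_def\<close>)
  then show ?thesis by (rule reaches_mono) auto
next
  case False
  define I1 where "I1 = I(9 := int c, 10 := 100)"
  have init: "reaches P (54, I, R) (\<lambda>st. st = (57::nat, I1, R)) 3"
    by (rule reaches_intro[where n=3]) (use c False in \<open>simp_all add: iregs_ok_def I1_def\<close>)
  define Inv where "Inv n st \<longleftrightarrow> (\<exists>I' l0. st = (57::nat, I', R) \<and> l0 + n = k
    \<and> I' 10 = int (100 + 2 * l0) \<and> (\<forall>l<l0. I' (101 + 2 * l) = int (s l)) \<and> stores_current I' s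
    \<and> agree_scalars_except {6, 7, 10} I' I1 \<and> I' 9 = int c)" for n st
  have loop: "reaches P st ?Q (k * 6 + 1)" if "Inv k st" for st
  proof (rule reaches_loop[where Inv=Inv and c=6 and d=1])
    fix n st assume "Inv (Suc n) st"
    then obtain I' l0 where h: "st = (57, I', R)" "l0 + Suc n = k" "I' 10 = int (100 + 2 * l0)"
      "\<forall>l<l0. I' (101 + 2 * l) = int (s l)" "stores_current I' s"
      "agree_scalars_except {6, 7, 10} I' I1" "I' 9 = int c"
      unfolding Inv_def by blast
    have l0: "l0 < k" using h(2) by simp
    have f: "I' 11 = int (100 + 2 * k)" "I' 15 = 1" "I' 14 = 2" "I' 13 = 0"
      "I' (100 + 2 * l0) = int (s l0)"
      using h(5,6) c(1) l0
      unfolding agree_scalars_except_def iregs_ok_def I1_def stores_current_def tuple_end_def by auto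
    have "Inv n (run P 6 st)"
      using h f l0 by (simp add: Inv_def del: of_nat_add of_nat_mult)
        (rule exI[of _ "Suc l0"], auto simp: agree_scalars_except_def stores_current_def less_Suc_eq)
    then show "reaches P st (Inv n) 6" by (rule reaches_intro) simp
  next
    fix st assume "Inv 0 st"
    then obtain I' where h: "st = (57, I', R)" "I' 10 = int (100 + 2 * k)"
      "\<forall>l<k. I' (101 + 2 * l) = int (s l)" "stores_current I' s"
      "agree_scalars_except {6, 7, 10} I' I1" "I' 9 = int c"
      unfolding Inv_def by auto
    have "I' 11 = int (100 + 2 * k)"
      using h(5) c(1) unfolding agree_scalars_except_def iregs_ok_def I1_def tuple_end_def by auto
    then show "reaches P st ?Q 1"
      by (intro reaches_intro[where n=1])
        (use h False in \<open>auto simp: agree_scalars_except_def stores_best_def I1_def\<close>)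
  qed (rule that)
  have "Inv k (57, I1, R)"
    unfolding Inv_def by (intro exI[of _ I1] exI[of _ 0])
      (use c in \<open>simp add: I1_def agree_scalars_except_def stores_current_def\<close>)
  then have "reaches P (54, I, R) ?Q (3 + (k * 6 + 1))"
    by (intro reaches_trans[OF init]) (use loop in simp)
  then show ?thesis by (rule reaches_mono) auto
qed

text \<open>The odometer loop leaves early, back at the scoring loop, as soon as a digit does not
  overflow; the invariant therefore has a second disjunct \<open>Advanced\<close> for that exit.\<close>

lemma phase_next_tuple:
  assumes c: "iregs_ok I" "stores_current I s" "col_tuple s"
  shows "reaches P (63, I, R) (\<lambda>(pc, I', R'). R' = R \<and> agree_scalars_except {7, 10} I' I
     \<and> (\<forall>l<k. I' (101 + 2 * l) = I (101 + 2 * l))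
     \<and> ((pc = 34 \<and> (\<exists>s'. stores_current I' s' \<and> col_tuple s'
            \<and> digit_value ncol k s' = digit_value ncol k s + 1))
        \<or> (pc = 73 \<and> digit_value ncol k s + 1 = ncol^k))) (1 + (k * 7 + 1))"
    (is "reaches _ _ ?Q _")
proof -
  have init: "reaches P (63, I, R) (\<lambda>st. st = (64::nat, I(10 := 100), R)) 1"
    by (rule reaches_intro[where n=1]) (use c in \<open>simp_all add: iregs_ok_def\<close>)
  define Advanced where "Advanced st \<longleftrightarrow> (\<exists>I'. st = (34::nat, I', R)
     \<and> agree_scalars_except {7, 10} I' I \<and> (\<forall>l<k. I' (101 + 2 * l) = I (101 + 2 * l))
     \<and> (\<exists>s'. stores_current I' s' \<and> col_tuple s' \<and> digit_value ncol k s' = digit_value ncol k s + 1))"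
    for st
  define Inv where "Inv n st \<longleftrightarrow> (\<exists>I' l0. st = (64::nat, I', R) \<and> l0 + n = k
     \<and> I' 10 = int (100 + 2 * l0) \<and> (\<forall>l<l0. s l = ncol - 1)
     \<and> (\<forall>l<k. I' (100 + 2 * l) = int (if l < l0 then 0 else s l))
     \<and> agree_scalars_except {7, 10} I' I \<and> (\<forall>l<k. I' (101 + 2 * l) = I (101 + 2 * l)))
     \<or> Advanced st" for n st
  have loop: "reaches P st ?Q (k * 7 + 1)" if "Inv k st" for st
  proof (rule reaches_loop[where Inv=Inv and c=7 and d=1])
    fix n st assume inv: "Inv (Suc n) st"
    show "reaches P st (Inv n) 7"
    proof (cases "Advanced st")
      case True
      then show ?thesis by (intro reaches_intro[where n=0]) (auto simp: Inv_def)
    next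
      case False
      then obtain I' l0 where h: "st = (64, I', R)" "l0 + Suc n = k" "I' 10 = int (100 + 2 * l0)"
        "\<forall>l<l0. s l = ncol - 1" "\<forall>l<k. I' (100 + 2 * l) = int (if l < l0 then 0 else s l)"
        "agree_scalars_except {7, 10} I' I" "\<forall>l<k. I' (101 + 2 * l) = I (101 + 2 * l)"
        using inv unfolding Inv_def by blast
      have l0: "l0 < k" using h(2) by simp
      have digit: "s l0 < ncol" using c(3) l0 by (simp add: col_tuple_def)
      have f: "I' 11 = int (100 + 2 * k)" "I' 15 = 1" "I' 14 = 2" "I' 13 = 0" "I' 1 = int ncol"
        "I' (100 + 2 * l0) = int (s l0)"
        using h(5,6) c(1) l0 unfolding agree_scalars_except_def iregs_ok_def tuple_end_def by auto
      show ?thesis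
      proof (cases "ncol \<le> s l0 + 1")
        case True
        then have "s l0 = ncol - 1" "int ncol \<le> int (s l0) + 1" using digit by simp_all
        then have "Inv n (run P 7 st)"
          using h f l0 by (simp add: Inv_def del: of_nat_add of_nat_mult)
            (rule disjI1, rule exI[of _ "Suc l0"], auto simp: agree_scalars_except_def less_Suc_eq)
        then show ?thesis by (rule reaches_intro) simp
      next
        case False
        define s' where "s' l = (if l < l0 then 0 else if l = l0 then s l0 + 1 else s l)" for l
        have "digit_value ncol k s' = digit_value ncol k s + 1"
          unfolding s'_def using digit_value_increment[OF ncol1 l0 h(4)] by simp
        moreover have "col_tuple s'" using c(3) False unfolding col_tuple_def s'_def by auto
        moreover have "\<not> int ncol \<le> int (s l0) + 1" using False by simp
        ultimately have "Inv n (run P 6 st)"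
          using h f l0 by (simp add: Inv_def Advanced_def del: of_nat_add of_nat_mult)
            (rule conjI, (auto simp: agree_scalars_except_def)[1], rule exI[of _ s'],
              auto simp: stores_current_def s'_def)
        then show ?thesis by (rule reaches_intro) simp
      qed
    qed
  next
    fix st assume inv: "Inv 0 st"
    show "reaches P st ?Q 1"
    proof (cases "Advanced st")
      case True
      then show ?thesis by (intro reaches_intro[where n=0]) (auto simp: Advanced_def)
    next
      case False
      then obtain I' where h: "st = (64, I', R)" "I' 10 = int (100 + 2 * k)"
        "\<forall>l<k. s l = ncol - 1" "agree_scalars_except {7, 10} I' I"
        "\<forall>l<k. I' (101 + 2 * l) = I (101 + 2 * l)"
        using inv unfolding Inv_def by auto
      have "I' 11 = int (100 + 2 * k)"
        using h(4) c(1) unfolding agree_scalars_except_def iregs_ok_def tuple_end_def by auto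
      moreover have "digit_value ncol k s + 1 = ncol^k" using digit_value_all_max[OF ncol1 h(3)] .
      ultimately show ?thesis
        by (intro reaches_intro[where n=1]) (use h in \<open>auto simp: agree_scalars_except_def\<close>)
    qed
  qed (rule that)
  have "Inv k (64, I(10 := 100), R)"
    unfolding Inv_def by (intro disjI1 exI[of _ "I(10 := 100)"] exI[of _ 0])
      (use c in \<open>simp add: agree_scalars_except_def stores_current_def\<close>)
  then show ?thesis
    by (intro reaches_trans[OF init]) (use loop in simp)
qed

lemma score_cong:
  assumes "col_tuple s" "col_tuple t" "digit_value ncol k s = digit_value ncol k t"
  shows "score s = score t"
proof -
  have "\<forall>l<k. s l = t l"
    using assms digit_value_inj[of k s ncol t] by (simp add: col_tuple_def)
  then have "row_sum s i = row_sum t i" for i unfolding row_sum_def by (intro sum.cong) auto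
  then show ?thesis unfolding score_def by simp
qed

definition best_so_far :: "int \<Rightarrow> (nat \<Rightarrow> nat) \<Rightarrow> (nat \<Rightarrow> nat) \<Rightarrow> bool" where
  "best_so_far c s b \<longleftrightarrow> (digit_value ncol k s = 0 \<and> c = -1)
     \<or> (0 < digit_value ncol k s \<and> c = int (score b)
        \<and> (\<forall>t. col_tuple t \<and> digit_value ncol k t < digit_value ncol k s \<longrightarrow> score t \<le> score b))"

lemma best_so_far_update:
  assumes best: "best_so_far c s b" and s: "col_tuple s"
    and b': "b' = (if int (score s) \<le> c then b else s)"
  shows "max c (int (score s)) = int (score b')"
    and "\<And>t. col_tuple t \<Longrightarrow> digit_value ncol k t \<le> digit_value ncol k s \<Longrightarrow> score t \<le> score b'"
proof -
  have same: "score t = score s" if "col_tuple t" "digit_value ncol k t = digit_value ncol k s" for t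
    using score_cong[OF that(1) s that(2)] .
  from best consider
      (first) "digit_value ncol k s = 0" "c = -1"
    | (later) "c = int (score b)"
        "\<forall>t. col_tuple t \<and> digit_value ncol k t < digit_value ncol k s \<longrightarrow> score t \<le> score b"
    unfolding best_so_far_def by auto
  then have "max c (int (score s)) = int (score b')
      \<and> (\<forall>t. col_tuple t \<and> digit_value ncol k t \<le> digit_value ncol k s \<longrightarrow> score t \<le> score b')"
  proof cases
    case first
    then show ?thesis using same b' by auto
  next
    case later
    then show ?thesis using same b' by (fastforce simp: le_less)
  qed
  then show "max c (int (score s)) = int (score b')"
    and "\<And>t. col_tuple t \<Longrightarrow> digit_value ncol k t \<le> digit_value ncol k s \<Longrightarrow> score t \<le> score b'"
    by auto
qed

definition search_done :: "state \<Rightarrow> bool" where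
  "search_done st \<longleftrightarrow> (\<exists>I R b. st = (73, I, R) \<and> iregs_ok I \<and> rregs_ok R \<and> stores_best I b
     \<and> col_tuple b \<and> (\<forall>t. col_tuple t \<longrightarrow> score t \<le> score b))"

definition search_inv :: "nat \<Rightarrow> state \<Rightarrow> bool" where
  "search_inv n st \<longleftrightarrow> (0 < n \<and> (\<exists>I R s b. st = (34, I, R) \<and> iregs_ok I \<and> rregs_ok R
       \<and> stores_current I s \<and> col_tuple s \<and> digit_value ncol k s + n = ncol^k
       \<and> stores_best I b \<and> col_tuple b \<and> best_so_far (I 9) s b))
     \<or> (n = 0 \<and> search_done st)"

definition search_step_cost :: nat where
  "search_step_cost = nrow * (k * 7 + 10) + k * 13 + 10"

lemma search_advance:
  assumes regs: "iregs_ok I" "rregs_ok R"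
    and s: "stores_current I s" "col_tuple s" "digit_value ncol k s + Suc n = ncol^k"
    and b: "stores_best I b" "col_tuple b" "I 9 = int (score b)"
    and best: "\<And>t. col_tuple t \<Longrightarrow> digit_value ncol k t \<le> digit_value ncol k s \<Longrightarrow> score t \<le> score b"
  shows "reaches P (63, I, R) (search_inv n) (1 + (k * 7 + 1))"
proof (rule reaches_mono[OF phase_next_tuple[OF regs(1) s(1,2)]])
  fix st :: state assume "(\<lambda>(pc, I', R'). R' = R \<and> agree_scalars_except {7, 10} I' I
      \<and> (\<forall>l<k. I' (101 + 2 * l) = I (101 + 2 * l))
      \<and> ((pc = 34 \<and> (\<exists>s'. stores_current I' s' \<and> col_tuple s'
            \<and> digit_value ncol k s' = digit_value ncol k s + 1))
        \<or> (pc = 73 \<and> digit_value ncol k s + 1 = ncol^k))) st"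
  then obtain pc I' where g: "st = (pc, I', R)" "agree_scalars_except {7, 10} I' I"
    "\<forall>l<k. I' (101 + 2 * l) = I (101 + 2 * l)"
    "(pc = 34 \<and> (\<exists>s'. stores_current I' s' \<and> col_tuple s'
        \<and> digit_value ncol k s' = digit_value ncol k s + 1))
     \<or> (pc = 73 \<and> digit_value ncol k s + 1 = ncol^k)"
    using state_caseE by blast
  have regs': "iregs_ok I'" "stores_best I' b" "I' 9 = int (score b)"
    using g(2,3) regs(1) b(1,3) unfolding iregs_ok_def agree_scalars_except_def stores_best_def
    by auto
  from g(4) show "search_inv n st"
  proof
    assume "pc = 34 \<and> (\<exists>s'. stores_current I' s' \<and> col_tuple s'
        \<and> digit_value ncol k s' = digit_value ncol k s + 1)"
    then obtain s' where s': "pc = 34" "stores_current I' s'" "col_tuple s'"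
      "digit_value ncol k s' = digit_value ncol k s + 1" by blast
    have "digit_value ncol k s' < ncol^k"
      using digit_value_less[of k s' ncol] s'(3) by (simp add: col_tuple_def)
    then have "0 < n" "digit_value ncol k s' + n = ncol^k" using s'(4) s(3) by simp_all
    moreover have "best_so_far (I' 9) s' b"
      unfolding best_so_far_def using s'(4) regs'(3) best by (auto simp: less_Suc_eq_le)
    ultimately show ?thesis
      unfolding search_inv_def g(1) s'(1) using s'(2,3) regs'(1,2) regs(2) b(2) by blast
  next
    assume last: "pc = 73 \<and> digit_value ncol k s + 1 = ncol^k"
    then have "n = 0" using s(3) by simp
    have "digit_value ncol k t \<le> digit_value ncol k s" if "col_tuple t" for t
      using digit_value_less[of k t ncol] that last by (simp add: col_tuple_def)
    then have "\<forall>t. col_tuple t \<longrightarrow> score t \<le> score b" using best by blast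
    then show ?thesis
      unfolding search_inv_def search_done_def g(1)
      using \<open>n = 0\<close> last regs'(1,2) regs(2) b(2) by blast
  qed
qed simp

lemma search_step:
  assumes "search_inv (Suc n) st"
  shows "reaches P st (search_inv n) search_step_cost"
proof -
  obtain I R s b where st: "st = (34, I, R)" and regs: "iregs_ok I" "rregs_ok R"
    and s: "stores_current I s" "col_tuple s" "digit_value ncol k s + Suc n = ncol^k"
    and b: "stores_best I b" "col_tuple b" "best_so_far (I 9) s b"
    using assms unfolding search_inv_def by auto
  define b' where "b' = (if int (score s) \<le> I 9 then b else s)"
  note b'_best = best_so_far_update[OF b(3) s(2) b'_def]
  define Scored where "Scored st' \<longleftrightarrow> (\<exists>I' R'. st' = (54::nat, I', R') \<and> iregs_ok I' \<and> rregs_ok R'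
      \<and> stores_current I' s \<and> stores_best I' b \<and> I' 9 = I 9 \<and> I' 8 = int (score s))" for st'
  define Updated where "Updated st' \<longleftrightarrow> (\<exists>I' R'. st' = (63::nat, I', R') \<and> iregs_ok I' \<and> rregs_ok R'
      \<and> stores_current I' s \<and> stores_best I' b' \<and> I' 9 = int (score b'))" for st'
  have scored: "reaches P st Scored (3 + (nrow * (k * 7 + 10) + 1))"
    unfolding st using regs s b
    by (intro reaches_mono[OF phase_score[OF regs s(1,2)]])
      (auto simp: Scored_def agree_except_def iregs_ok_def rregs_ok_def stores_current_def
        stores_best_def hist_base_def)
  have updated: "reaches P st' Updated (k * 6 + 4)" if scored: "Scored st'" for st'
  proof -
    obtain I' R' where h: "st' = (54, I', R')" "iregs_ok I'" "rregs_ok R'" "stores_current I' s"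
      "stores_best I' b" "I' 9 = I 9" "I' 8 = int (score s)"
      using scored unfolding Scored_def by blast
    show ?thesis
      unfolding h(1) using h b'_best(1)
      by (intro reaches_mono[OF phase_update_best[OF h(2,4,7)]])
        (auto simp: Updated_def agree_scalars_except_def iregs_ok_def stores_best_def b'_def
          split: if_splits)
  qed
  have advanced: "reaches P st' (search_inv n) (1 + (k * 7 + 1))" if updated: "Updated st'" for st'
  proof -
    obtain I' R' where h: "st' = (63, I', R')" "iregs_ok I'" "rregs_ok R'" "stores_current I' s"
      "stores_best I' b'" "I' 9 = int (score b')"
      using updated unfolding Updated_def by blast
    have "col_tuple b'" using s(2) b(2) by (simp add: b'_def)
    then show ?thesis
      unfolding h(1) by (rule search_advance[OF h(2,3,4) s(2,3) h(5) _ h(6) b'_best(2)])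
  qed
  have "reaches P st (search_inv n) ((3 + (nrow * (k * 7 + 10) + 1)) + ((k * 6 + 4) + (1 + (k * 7 + 1))))"
    by (intro reaches_trans[OF scored] reaches_trans[OF updated advanced])
  then show ?thesis by (rule reaches_mono) (simp_all add: search_step_cost_def)
qed

lemma search_loop:
  assumes "search_inv (ncol^k) st"
  shows "reaches P st search_done (ncol^k * search_step_cost)"
proof -
  have "reaches P st search_done (ncol^k * search_step_cost + 0)"
  proof (rule reaches_loop[where Inv=search_inv])
    show "reaches P s (search_inv n) search_step_cost" if "search_inv (Suc n) s" for n s
      using that by (rule search_step)
    show "reaches P s search_done 0" if "search_inv 0 s" for s
      using that by (intro reaches_intro[where n=0]) (simp_all add: search_inv_def)
  qed (rule assms)
  then show ?thesis by simp
qed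

definition empirical_dist :: "(nat \<Rightarrow> nat) \<Rightarrow> nat \<Rightarrow> real" where
  "empirical_dist b j = real (card {l. l < k \<and> b l = j}) / real k"

lemma phase_histogram:
  assumes c: "iregs_ok I" "rregs_ok R" "stores_best I b" "col_tuple b"
  shows "reaches P (73, I, R) (\<lambda>(pc, I', R'). pc = 86 \<and> agree_except {6, 7, 10} I' I
     \<and> (\<forall>j<ncol. R' (hist_base + j) = empirical_dist b j)) (4 + (k * 9 + 1))"
    (is "reaches _ _ ?Q _")
proof -
  define R1 where "R1 = R(5 := 1 / real k, 6 := real k)"
  have init: "reaches P (73, I, R) (\<lambda>st. st = (77::nat, I(10 := 100), R1)) 4"
    by (rule reaches_intro[where n=4]) (use c in \<open>simp_all add: iregs_ok_def R1_def fun_upd_twist\<close>)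
  define Inv where "Inv n st \<longleftrightarrow> (\<exists>I' R' l0. st = (77::nat, I', R') \<and> l0 + n = k
     \<and> I' 10 = int (100 + 2 * l0) \<and> agree_except {6, 7, 10} I' I \<and> R' 5 = 1 / real k
     \<and> (\<forall>j<ncol. R' (hist_base + j) = real (card {l. l < l0 \<and> b l = j}) * (1 / real k)))" for n st
  have loop: "reaches P st ?Q (k * 9 + 1)" if "Inv k st" for st
  proof (rule reaches_loop[where Inv=Inv and c=9 and d=1])
    fix n st assume "Inv (Suc n) st"
    then obtain I' R' l0 where h: "st = (77, I', R')" "l0 + Suc n = k" "I' 10 = int (100 + 2 * l0)"
      "agree_except {6, 7, 10} I' I" "R' 5 = 1 / real k"
      "\<forall>j<ncol. R' (hist_base + j) = real (card {l. l < l0 \<and> b l = j}) * (1 / real k)"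
      unfolding Inv_def by blast
    have l0: "l0 < k" using h(2) by simp
    have f: "I' 11 = int (100 + 2 * k)" "I' 15 = 1" "I' 14 = 2" "I' 13 = 0" "I' 20 = int hist_base"
      "I' (101 + 2 * l0) = int (b l0)"
      using h(4) c(1,3) l0 unfolding agree_except_def iregs_ok_def stores_best_def tuple_end_def by auto
    have "b l0 < ncol" using c(4) l0 by (simp add: col_tuple_def)
    moreover have "hist_base \<ge> 8" by (simp add: hist_base_def)
    ultimately have "Inv n (run P 9 st)"
      using h f l0 by (simp add: Inv_def del: of_nat_add of_nat_mult) (rule exI[of _ "Suc l0"],
        auto simp: agree_except_def card_filter_less_Suc algebra_simps add_divide_distrib)
    then show "reaches P st (Inv n) 9" by (rule reaches_intro) simp
  next
    fix st assume "Inv 0 st"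
    then obtain I' R' where h: "st = (77, I', R')" "I' 10 = int (100 + 2 * k)"
      "agree_except {6, 7, 10} I' I" "\<forall>j<ncol. R' (hist_base + j) = empirical_dist b j"
      unfolding Inv_def empirical_dist_def by auto
    have "I' 11 = int (100 + 2 * k)"
      using h(3) c(1) unfolding agree_except_def iregs_ok_def tuple_end_def by auto
    then show "reaches P st ?Q 1"
      by (intro reaches_intro[where n=1]) (use h in simp_all)
  qed (rule that)
  have "Inv k (77, I(10 := 100), R1)"
    unfolding Inv_def by (intro exI[of _ "I(10 := 100)"] exI[of _ R1] exI[of _ 0])
      (use c in \<open>auto simp: R1_def agree_except_def rregs_ok_def hist_base_def\<close>)
  then show ?thesis
    by (intro reaches_trans[OF init]) (use loop in simp)
qed

lemma phase_output:
  assumes c: "I 1 = int ncol" "I 13 = 0" "I 15 = 1" "I 20 = int hist_base"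
    "\<forall>j<ncol. R (hist_base + j) = X j"
  shows "reaches P (86, I, R) (\<lambda>(pc, I', R'). pc = 93 \<and> (\<forall>j<ncol. R' j = X j)) (1 + (ncol * 6 + 1))"
    (is "reaches _ _ ?Q _")
proof -
  have init: "reaches P (86, I, R) (\<lambda>st. st = (87::nat, I(5 := int ncol), R)) 1"
    by (rule reaches_intro[where n=1]) (use c in simp_all)
  define Inv where "Inv n st \<longleftrightarrow> (\<exists>I' R'. st = (87::nat, I', R') \<and> n \<le> ncol \<and> I' 5 = int n
     \<and> (\<forall>j. n \<le> j \<and> j < ncol \<longrightarrow> R' j = X j) \<and> (\<forall>j<ncol. R' (hist_base + j) = X j)
     \<and> agree_except {5, 6} I' I)" for n st
  have loop: "reaches P st ?Q (ncol * 6 + 1)" if "Inv ncol st" for st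
  proof (rule reaches_loop[where Inv=Inv and c=6 and d=1])
    fix n st assume "Inv (Suc n) st"
    then obtain I' R' where h: "st = (87, I', R')" "Suc n \<le> ncol" "I' 5 = int (Suc n)"
      "\<forall>j. Suc n \<le> j \<and> j < ncol \<longrightarrow> R' j = X j" "\<forall>j<ncol. R' (hist_base + j) = X j"
      "agree_except {5, 6} I' I"
      unfolding Inv_def by blast
    have f: "I' 13 = 0" "I' 15 = 1" "I' 20 = int hist_base" "R' (hist_base + n) = X n"
      using h c by (auto simp: agree_except_def)
    have "hist_base \<ge> ncol" by (simp add: hist_base_def)
    then have "Inv n (run P 6 st)"
      using h f by (simp add: Inv_def del: of_nat_add of_nat_mult) (auto simp: agree_except_def)
    then show "reaches P st (Inv n) 6" by (rule reaches_intro) simp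
  next
    fix st assume "Inv 0 st"
    then obtain I' R' where h: "st = (87, I', R')" "I' 5 = 0" "\<forall>j<ncol. R' j = X j"
      "agree_except {5, 6} I' I"
      unfolding Inv_def by auto
    have "I' 13 = 0" using h c by (auto simp: agree_except_def)
    then show "reaches P st ?Q 1"
      by (intro reaches_intro[where n=1]) (use h in simp_all)
  qed (rule that)
  have "Inv ncol (87, I(5 := int ncol), R)"
    unfolding Inv_def using c by (auto simp: agree_except_def)
  then show ?thesis
    by (intro reaches_trans[OF init]) (use loop in simp)
qed

lemma mfs_prog_finish:
  assumes "search_done st"
  shows "reaches P st (\<lambda>st'. halted P st' \<and> (\<exists>b. col_tuple b \<and> (\<forall>t. col_tuple t \<longrightarrow> score t \<le> score b)
      \<and> (\<forall>j<ncol. ram_output st' j = empirical_dist b j))) ((4 + (k * 9 + 1)) + (1 + (ncol * 6 + 1)))"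
proof -
  obtain I R b where st: "st = (73, I, R)" "iregs_ok I" "rregs_ok R" "stores_best I b" "col_tuple b"
    and opt: "\<forall>t. col_tuple t \<longrightarrow> score t \<le> score b"
    using assms unfolding search_done_def by auto
  show ?thesis unfolding st(1)
  proof (rule reaches_trans[OF phase_histogram[OF st(2-5)]])
    fix st' :: state assume "(\<lambda>(pc, I', R'). pc = 86 \<and> agree_except {6, 7, 10} I' I
        \<and> (\<forall>j<ncol. R' (hist_base + j) = empirical_dist b j)) st'"
    then obtain I' R' where h: "st' = (86, I', R')" "agree_except {6, 7, 10} I' I"
      "\<forall>j<ncol. R' (hist_base + j) = empirical_dist b j"
      using state_caseE by blast
    have "I' 1 = int ncol" "I' 13 = 0" "I' 15 = 1" "I' 20 = int hist_base"
      using h(2) st(2) unfolding agree_except_def iregs_ok_def by auto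
    then show "reaches P st' (\<lambda>st'. halted P st' \<and> (\<exists>b. col_tuple b
        \<and> (\<forall>t. col_tuple t \<longrightarrow> score t \<le> score b) \<and> (\<forall>j<ncol. ram_output st' j = empirical_dist b j)))
        (1 + (ncol * 6 + 1))"
      unfolding h(1) using st(5) opt
      by (intro reaches_mono[OF phase_output[OF _ _ _ _ h(3)]]) (auto simp: halted_def ram_output_def)
  qed
qed

lemma entry_index_less: "i < nrow \<Longrightarrow> j < ncol \<Longrightarrow> i * ncol + j < N"
proof -
  assume "i < nrow" "j < ncol"
  then have "i * ncol + j < (i + 1) * ncol" by simp
  also have "\<dots> \<le> N" using \<open>i < nrow\<close> unfolding N_def by (intro mult_right_mono) auto
  finally show ?thesis .
qed

lemma matrix_copied:
  assumes nr: "nrow \<ge> 1"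
  shows "reaches P (init_state A nrow ncol) (\<lambda>(pc, I, R). pc = 19 \<and> I 0 = int nrow \<and> I 1 = int ncol
      \<and> I 2 = int N \<and> I 3 = int N + 8 \<and> I 13 = 0 \<and> I 14 = 2 \<and> I 15 = 1 \<and> I 16 = int (4 * m^2)
      \<and> I 19 = 100 \<and> (\<forall>a\<ge>100. I a = 0)
      \<and> (\<forall>i<nrow. \<forall>j<ncol. R (N + 8 + i * ncol + j) = A i j) \<and> (\<forall>a\<ge>2 * N + 8. R a = 0))
    ((6 + (nrow * 4 + 3)) + (1 + (N * 6 + 1)))"
    (is "reaches _ _ ?Q _")
proof -
  define I0 where "I0 = (\<lambda>a::nat. if a = 0 then int nrow else if a = 1 then int ncol else (0::int))"
  define R0 where "R0 = (\<lambda>a. if a < N then A (a div ncol) (a mod ncol) else (0::real))"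
  have init: "init_state A nrow ncol = (0, I0, R0)"
    unfolding init_state_def I0_def R0_def N_def by simp
  have size: "reaches P (0, I0, R0) (\<lambda>(pc, I', R'). pc = 12 \<and> I' 2 = int N \<and> I' 3 = int N + 8
     \<and> I' 14 = 2 \<and> I' 15 = 1 \<and> I' 16 = int (4 * m^2) \<and> I' 19 = 100
     \<and> agree_except {2, 3, 5, 7, 14, 15, 16, 19} I' I0 \<and> R' = R0) (6 + (nrow * 4 + 3))"
    by (rule phase_matrix_size) (use nr in \<open>simp_all add: I0_def\<close>)
  show ?thesis unfolding init
  proof (rule reaches_trans[OF size])
    fix st :: state assume "(\<lambda>(pc, I', R'). pc = 12 \<and> I' 2 = int N \<and> I' 3 = int N + 8
       \<and> I' 14 = 2 \<and> I' 15 = 1 \<and> I' 16 = int (4 * m^2) \<and> I' 19 = 100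
       \<and> agree_except {2, 3, 5, 7, 14, 15, 16, 19} I' I0 \<and> R' = R0) st"
    then obtain I1 where g: "st = (12, I1, R0)" "I1 2 = int N" "I1 3 = int N + 8" "I1 14 = 2"
      "I1 15 = 1" "I1 16 = int (4 * m^2)" "I1 19 = 100" "agree_except {2, 3, 5, 7, 14, 15, 16, 19} I1 I0"
      using state_caseE by blast
    have "I1 13 = 0" using g(8) by (auto simp: agree_except_def I0_def)
    show "reaches P st ?Q (1 + (N * 6 + 1))"
      unfolding g(1)
    proof (rule reaches_mono[OF phase_copy_matrix[OF g(2,3,5) \<open>I1 13 = 0\<close>]])
      fix st' :: state assume "(\<lambda>(pc, I', R'). pc = 19 \<and> agree_except {5, 6} I' I1
        \<and> (\<forall>a<N. R' (N + 8 + a) = R0 a) \<and> (\<forall>a. 2 * N + 8 \<le> a \<longrightarrow> R' a = R0 a)) st'"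
      then obtain I2 R2 where h: "st' = (19, I2, R2)" "agree_except {5, 6} I2 I1"
        "\<forall>a<N. R2 (N + 8 + a) = R0 a" "\<forall>a. 2 * N + 8 \<le> a \<longrightarrow> R2 a = R0 a"
        using state_caseE by blast
      have "R2 (N + 8 + i * ncol + j) = A i j" if "i < nrow" "j < ncol" for i j
        using h(3) entry_index_less[OF that] that by (simp add: R0_def add.assoc)
      moreover have "R2 a = 0" if "a \<ge> 2 * N + 8" for a
        using h(4) that by (simp add: R0_def)
      ultimately show "?Q st'"
        using h(1,2) g \<open>I1 13 = 0\<close> by (auto simp: agree_except_def I0_def)
    qed simp
  qed
qed

definition setup_steps :: nat where
  "setup_steps = (6 + (nrow * 4 + 3)) + (1 + (N * 6 + 1)) + (3 + (L * 4 + 9))"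

lemma mfs_prog_setup:
  assumes nr: "nrow \<ge> 1"
  shows "reaches P (init_state A nrow ncol) (search_inv (ncol^k)) setup_steps"
  unfolding setup_steps_def
proof (rule reaches_trans[OF matrix_copied[OF nr]])
  fix st :: state assume "(\<lambda>(pc, I, R). pc = 19 \<and> I 0 = int nrow \<and> I 1 = int ncol
      \<and> I 2 = int N \<and> I 3 = int N + 8 \<and> I 13 = 0 \<and> I 14 = 2 \<and> I 15 = 1 \<and> I 16 = int (4 * m^2)
      \<and> I 19 = 100 \<and> (\<forall>a\<ge>100. I a = 0)
      \<and> (\<forall>i<nrow. \<forall>j<ncol. R (N + 8 + i * ncol + j) = A i j) \<and> (\<forall>a\<ge>2 * N + 8. R a = 0)) st"
  then obtain I R where g: "st = (19, I, R)" "I 0 = int nrow" "I 1 = int ncol" "I 2 = int N"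
    "I 3 = int N + 8" "I 13 = 0" "I 14 = 2" "I 15 = 1" "I 16 = int (4 * m^2)" "I 19 = 100"
    "\<forall>a\<ge>100. I a = 0" "\<forall>i<nrow. \<forall>j<ncol. R (N + 8 + i * ncol + j) = A i j" "\<forall>a\<ge>2 * N + 8. R a = 0"
    using state_caseE by blast
  show "reaches P st (search_inv (ncol^k)) (3 + (L * 4 + 9))"
    unfolding g(1)
  proof (rule reaches_mono[OF phase_sample_size[OF g(2,3,6,8,9,10,4,5)]])
    fix st' :: state assume "(\<lambda>(pc, I', R'). pc = 34 \<and> I' 4 = int k \<and> I' 11 = int tuple_end
       \<and> I' 18 = - int k \<and> I' 9 = -1 \<and> I' 20 = int hist_base \<and> R' 2 = real m \<and> R' 3 = - real k
       \<and> agree_except {4, 9, 11, 17, 18, 20, 21} I' I \<and> agree_except {2, 3} R' R) st'"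
    then obtain I' R' where h: "st' = (34, I', R')" "I' 4 = int k" "I' 11 = int tuple_end"
      "I' 18 = - int k" "I' 9 = -1" "I' 20 = int hist_base" "R' 2 = real m" "R' 3 = - real k"
      "agree_except {4, 9, 11, 17, 18, 20, 21} I' I" "agree_except {2, 3} R' R"
      using state_caseE by blast
    have "iregs_ok I'" using h g unfolding iregs_ok_def agree_except_def by auto
    moreover have "rregs_ok R'"
      using h(7-10) g(12,13) unfolding rregs_ok_def agree_except_def by (auto simp: hist_base_def)
    moreover have "stores_current I' (\<lambda>_. 0)" "stores_best I' (\<lambda>_. 0)"
      using h(9) g(11) unfolding stores_current_def stores_best_def agree_except_def by auto
    ultimately show "search_inv (ncol^k) st'"
      using h(1,5) ncol1
      by (auto simp: search_inv_def col_tuple_def digit_value_def best_so_far_def intro!: exI[of _ "\<lambda>_. 0"])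
  qed simp
qed

definition total_steps :: nat where
  "total_steps = setup_steps + ncol^k * search_step_cost + ((4 + (k * 9 + 1)) + (1 + (ncol * 6 + 1)))"

lemma mfs_prog_run:
  assumes "nrow \<ge> 1"
  shows "reaches P (init_state A nrow ncol) (\<lambda>st. halted P st \<and> (\<exists>b. col_tuple b
      \<and> (\<forall>t. col_tuple t \<longrightarrow> score t \<le> score b) \<and> (\<forall>j<ncol. ram_output st j = empirical_dist b j)))
    total_steps"
  unfolding total_steps_def
  by (intro reaches_trans[OF reaches_trans[OF mfs_prog_setup[OF assms] search_loop] mfs_prog_finish])

lemma empirical_dist_solves:
  assumes Ab: "\<forall>i<nrow. \<forall>j<ncol. \<bar>A i j\<bar> \<le> 1" and eps: "1 / real m \<le> eps"
    and b: "col_tuple b" and opt: "\<forall>t. col_tuple t \<longrightarrow> score t \<le> score b"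
    and x: "\<forall>j<ncol. x j = empirical_dist b j"
  shows "eps_mfs_solution eps A nrow ncol x"
proof -
  have kpos: "0 < real k" using k_pos by simp
  have b_less: "\<forall>l<k. b l < ncol" using b by (simp add: col_tuple_def)
  have mat_vec_x: "mat_vec A ncol x i = row_sum b i / real k" for i
  proof -
    have "mat_vec A ncol x i = (\<Sum>j<ncol. A i j * real (card {l. l < k \<and> b l = j})) / real k"
      unfolding mat_vec_def sum_divide_distrib using x by (intro sum.cong) (auto simp: empirical_dist_def)
    also have "\<dots> = row_sum b i / real k"
      using sum_card_fibres[OF b_less, of "A i"] by (simp add: row_sum_def)
    finally show ?thesis .
  qed
  have x_simplex: "x \<in> prob_simplex ncol"
  proof -
    have "(\<Sum>j<ncol. x j) = (\<Sum>j<ncol. 1 * real (card {l. l < k \<and> b l = j})) / real k"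
      unfolding sum_divide_distrib using x by (intro sum.cong) (auto simp: empirical_dist_def)
    also have "\<dots> = 1" using sum_card_fibres[OF b_less, of "\<lambda>_. 1"] kpos by simp
    finally show ?thesis using x unfolding prob_simplex_def empirical_dist_def by auto
  qed
  obtain y where y: "y \<in> prob_simplex ncol" "mfs_opt A nrow ncol = num_feasible A nrow ncol 0 y"
    using mfs_opt_attained[OF ncol1] by blast
  obtain t where t: "\<forall>l<k. t l < ncol"
    "\<forall>i<nrow. 0 \<le> mat_vec A ncol y i \<longrightarrow> - real k \<le> real m * (\<Sum>l<k. A i (t l))"
    using sparse_approximation[OF y(1) Ab m1 k_def nrow_less_2_pow_L] by blast
  have "num_feasible A nrow ncol 0 y \<le> score t"
    unfolding num_feasible_def score_def row_sum_def using t(2) by (intro card_mono) auto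
  also have "score t \<le> score b" using opt t(1) by (simp add: col_tuple_def)
  also have "score b \<le> num_feasible A nrow ncol eps x"
    unfolding num_feasible_def score_def
  proof (intro card_mono subsetI)
    fix i assume "i \<in> {i. i < nrow \<and> - real k \<le> real m * row_sum b i}"
    then have "i < nrow" "- (1 / real m) \<le> row_sum b i / real k"
      using kpos m1 by (auto simp: field_simps)
    then show "i \<in> {i. i < nrow \<and> - eps \<le> mat_vec A ncol x i}" using eps mat_vec_x by simp
  qed simp
  finally show ?thesis unfolding eps_mfs_solution_def using x_simplex y(2) by simp
qed

section \<open>Running time\<close>

lemma total_steps_le:
  assumes nr: "nrow \<ge> 1"
  shows "total_steps \<le> 70 * (N + 2)^(2 * k + 1)"
proof -
  define n where "n = N + 2"
  have n2: "n \<ge> 2" unfolding n_def by simp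
  have "nrow \<le> N" "ncol \<le> N" unfolding N_def using nr ncol1 by simp_all
  then have small: "nrow \<le> n" "ncol \<le> n" "N \<le> n" unfolding n_def by simp_all
  have "1 \<le> 4 * m^2" using m1 by (simp add: Suc_le_eq)
  from mult_le_mono1[OF this, of "L + 1"] have "L \<le> k" unfolding k_def by simp
  have "(k + 1) * 1 \<le> (k + 1) * n" using n2 by (intro mult_left_mono) auto
  then have kn: "k + 1 \<le> (k + 1) * n" by simp
  have "nrow * (k * 7 + 10) \<le> n * (10 * (k + 1))"
    using small by (intro mult_mono) auto
  then have cost: "search_step_cost \<le> 30 * ((k + 1) * n)"
    unfolding search_step_cost_def using kn by (simp add: algebra_simps)
  have "setup_steps + ((4 + (k * 9 + 1)) + (1 + (ncol * 6 + 1))) \<le> 30 + 16 * n + 13 * k"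
    unfolding setup_steps_def using small \<open>L \<le> k\<close> by simp
  also have "\<dots> \<le> 40 * ((k + 1) * n)" using kn n2 by (simp add: algebra_simps)
  also have "\<dots> \<le> 40 * ((k + 1) * n^(k + 1))"
    using n2 by (intro mult_left_mono) (auto simp: self_le_power)
  finally have rest: "setup_steps + ((4 + (k * 9 + 1)) + (1 + (ncol * 6 + 1))) \<le> 40 * ((k + 1) * n^(k + 1))" .
  have "ncol^k * search_step_cost \<le> n^k * (30 * ((k + 1) * n))"
    using small cost by (intro mult_le_mono power_mono) auto
  then have "total_steps \<le> 70 * (k + 1) * n^(k + 1)"
    using rest unfolding total_steps_def by (simp add: algebra_simps)
  also have "k + 1 \<le> n^k"
  proof -
    have "k < 2^k" by (rule less_exp)
    also have "(2::nat)^k \<le> n^k" using n2 by (intro power_mono) auto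
    finally show ?thesis by simp
  qed
  then have "70 * (k + 1) * n^(k + 1) \<le> 70 * n^k * n^(k + 1)" by (intro mult_right_mono) auto
  also have "\<dots> = 70 * n^(2 * k + 1)" by (simp add: power_add[symmetric] mult_2)
  finally show ?thesis unfolding n_def .
qed

lemma L_le_ln:
  assumes nr: "nrow \<ge> 1"
  shows "real (L + 1) \<le> 6 * ln (real (N + 2))"
proof -
  define n where "n = N + 2"
  have n2: "n \<ge> 2" unfolding n_def by simp
  have ln2: "1/2 \<le> ln (2::real)" using exp_half_le2 ln_ge_iff[of 2 "1/2"] by simp
  have lnn: "ln 2 \<le> ln (real n)" using n2 by simp
  have "nrow * 1 \<le> nrow * ncol" using ncol1 by (intro mult_left_mono) auto
  then have "nrow \<le> n" unfolding n_def N_def by linarith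
  then have "2^L \<le> 2 * n" using pow_2_le_nrow[of "L - 1"] n2 by (cases L) auto
  then have "(2::real)^L \<le> 2 * real n"
    by (metis of_nat_le_iff of_nat_mult of_nat_numeral of_nat_power)
  then have "ln ((2::real)^L) \<le> ln (2 * real n)" using n2 by simp
  then have "real L * ln 2 \<le> ln 2 + ln (real n)" using n2 by (simp add: ln_realpow ln_mult)
  also have "\<dots> \<le> (1 + 2 * ln (real n)) * ln 2"
  proof -
    have "ln (real n) * 1 \<le> ln (real n) * (2 * ln 2)" using ln2 lnn by (intro mult_left_mono) auto
    then show ?thesis by (simp add: algebra_simps)
  qed
  finally have "real L \<le> 1 + 2 * ln (real n)" using ln2 by (simp add: mult_le_cancel_right)
  moreover have "1/2 \<le> ln (real n)" using ln2 lnn by linarith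
  ultimately have "real (L + 1) \<le> 6 * ln (real n)" by simp
  then show ?thesis unfolding n_def .
qed

lemma total_steps_le_powr:
  assumes nr: "nrow \<ge> 1"
  shows "real total_steps
    \<le> real (50 * m^2 + 70) * real (N + 2) powr (real (50 * m^2 + 70) * ln (real (N + 2)))"
proof -
  define n where "n = real (N + 2)"
  have n2: "n \<ge> 2" unfolding n_def by simp
  have "1/2 \<le> ln (2::real)" using exp_half_le2 ln_ge_iff[of 2 "1/2"] by simp
  then have lnn: "1/2 \<le> ln n" using n2 by (smt (verit) ln_le_cancel_iff)
  have "real k = 4 * real m^2 * real (L + 1)"
    unfolding k_def by (simp only: of_nat_mult of_nat_power of_nat_numeral)
  also have "\<dots> \<le> 4 * real m^2 * (6 * ln n)"
    using L_le_ln[OF nr] unfolding n_def by (intro mult_left_mono) auto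
  finally have "real (2 * k + 1) \<le> real (50 * m^2 + 70) * ln n"
    using lnn by (simp add: algebra_simps)
  then have exponent: "n powr real (2 * k + 1) \<le> n powr (real (50 * m^2 + 70) * ln n)"
    using n2 by (intro powr_mono) auto
  have "real total_steps \<le> real (70 * (N + 2)^(2 * k + 1))"
    using total_steps_le[OF nr] by (rule of_nat_mono)
  also have "\<dots> = 70 * n ^ (2 * k + 1)"
    unfolding n_def by (simp only: of_nat_mult of_nat_power of_nat_numeral)
  also have "\<dots> = 70 * n powr real (2 * k + 1)"
    using n2 by (subst powr_realpow) auto
  also have "\<dots> \<le> 70 * n powr (real (50 * m^2 + 70) * ln n)"
    using exponent by simp
  also have "\<dots> \<le> real (50 * m^2 + 70) * n powr (real (50 * m^2 + 70) * ln n)"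
    by (intro mult_right_mono) auto
  finally show ?thesis unfolding n_def .
qed

lemma mfs_prog_no_rows:
  "halted P (run P 2 (init_state A 0 ncol))
    \<and> eps_mfs_solution eps A 0 ncol (ram_output (run P 2 (init_state A 0 ncol)))"
proof -
  have out: "ram_output (run P 2 (init_state A 0 ncol)) = (\<lambda>j. if j = 0 then 1 else 0)"
    by (rule ext) (simp add: init_state_def ram_output_def)
  have "mfs_opt A 0 ncol = 0"
    using mfs_opt_attained[OF ncol1, of A 0] by (auto simp: num_feasible_def)
  then show ?thesis
    unfolding out using unit_vector_in_prob_simplex[of ncol] ncol1
    by (simp add: init_state_def halted_def eps_mfs_solution_def)
qed

lemma mfs_prog_correct:
  assumes "\<forall>i<nrow. \<forall>j<ncol. \<bar>A i j\<bar> \<le> 1" and "1 / real m \<le> eps"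
  shows "\<exists>t. real t \<le> real (50 * m^2 + 70) * real (N + 2) powr (real (50 * m^2 + 70) * ln (real (N + 2)))
     \<and> halted P (run P t (init_state A nrow ncol))
     \<and> eps_mfs_solution eps A nrow ncol (ram_output (run P t (init_state A nrow ncol)))"
proof (cases "nrow = 0")
  case True
  have "real (2::nat) \<le> 70 * 1" by simp
  also have "\<dots> \<le> real (50 * m^2 + 70) * real (N + 2) powr (real (50 * m^2 + 70) * ln (real (N + 2)))"
    by (intro mult_mono ge_one_powr_ge_zero) auto
  finally have "real (2::nat) \<le> real (50 * m^2 + 70) * real (N + 2) powr (real (50 * m^2 + 70) * ln (real (N + 2)))" .
  moreover have "halted P (run P 2 (init_state A nrow ncol))
    \<and> eps_mfs_solution eps A nrow ncol (ram_output (run P 2 (init_state A nrow ncol)))"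
    using mfs_prog_no_rows unfolding True .
  ultimately show ?thesis by blast
next
  case False
  then have nr: "nrow \<ge> 1" by simp
  obtain t b where t: "t \<le> total_steps" "halted P (run P t (init_state A nrow ncol))"
    and b: "col_tuple b" "\<forall>t. col_tuple t \<longrightarrow> score t \<le> score b"
      "\<forall>j<ncol. ram_output (run P t (init_state A nrow ncol)) j = empirical_dist b j"
    using mfs_prog_run[OF nr] unfolding reaches_def by blast
  have "real t \<le> real total_steps" using t(1) by simp
  also note total_steps_le_powr[OF nr]
  finally show ?thesis using t(2) empirical_dist_solves[OF assms b] by blast
qed

end

theorem theorem4:
  fixes eps :: real
  assumes "eps > 0"
  shows "\<exists>(P :: instr list) (C :: real). \<forall>(A :: nat \<Rightarrow> nat \<Rightarrow> real) nrow ncol.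
           ncol \<ge> 1 \<longrightarrow> (\<forall>i<nrow. \<forall>j<ncol. \<bar>A i j\<bar> \<le> 1) \<longrightarrow>
           (\<exists>t. real t \<le> C * real (nrow * ncol + 2) powr (C * ln (real (nrow * ncol + 2)))
                \<and> halted P (run P t (init_state A nrow ncol))
                \<and> eps_mfs_solution eps A nrow ncol (ram_output (run P t (init_state A nrow ncol))))"
proof -
  define m where "m = nat \<lceil>1 / eps\<rceil>"
  have m1: "m \<ge> 1" unfolding m_def using assms by (simp add: Suc_le_eq)
  have "1 / eps \<le> real m" unfolding m_def by (rule real_nat_ceiling_ge)
  then have eps: "1 / real m \<le> eps" using assms m1 by (simp add: field_simps)
  show ?thesis
  proof (intro exI[of _ "mfs_prog m"] exI[of _ "real (50 * m^2 + 70)"] allI impI)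
    fix A :: "nat \<Rightarrow> nat \<Rightarrow> real" and nrow ncol :: nat
    assume "ncol \<ge> 1" and A: "\<forall>i<nrow. \<forall>j<ncol. \<bar>A i j\<bar> \<le> 1"
    then interpret mfs_run m nrow ncol A using m1 by unfold_locales
    show "\<exists>t. real t \<le> real (50 * m^2 + 70) * real (nrow * ncol + 2)
                powr (real (50 * m^2 + 70) * ln (real (nrow * ncol + 2)))
          \<and> halted (mfs_prog m) (run (mfs_prog m) t (init_state A nrow ncol))
          \<and> eps_mfs_solution eps A nrow ncol (ram_output (run (mfs_prog m) t (init_state A nrow ncol)))"
      using mfs_prog_correct[OF A eps] by (simp only: N_def)
  qed
qed

end
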